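(* Let $G=\mathbb{Z}^N$ for some $N\in\mathbb{N}$, and let $L(\cdot)$ be one of $|\cdot|_1$, $|\cdot|_2$ or $|\cdot|_2^2$ (the usual $\ell^1$-norm, $\ell^2$-norm, or squared $\ell^2$-norm on $\mathbb{Z}^N$). For $r\in(0,1)$ set $\varphi_r=r^{L}$. Then for every normalized 2-cocycle $\sigma$ on $\mathbb{Z}^N$, $\{\varphi_r\}_{r\to1^-}$ is a bounded Fourier summing net for $(G,\sigma)$; in particular $\sum_{g\in\mathbb{Z}^N}r^{L(g)}\widehat x(g)\Lambda_\sigma(g)\to x$ in operator norm as $r\to1^-$, for every $x\in C^*_r(\mathbb{Z}^N,\sigma)$.
   Context: $\sigma:G\times G\to\mathbb{T}$ is a normalized 2-cocycle ($\sigma(g,h)\sigma(gh,k)=\sigma(h,k)\sigma(g,hk)$, $\sigma(g,e)=\sigma(e,g)=1$); $\Lambda_\sigma(g)$ is the unitary on $\ell^2(G)$ with $(\Lambda_\sigma(g)\xi)(h)=\sigma(g,g^{-1}h)\xi(g^{-1}h)$; $C^*_r(G,\sigma)$ is the operator-norm closure of $\mathrm{span}\,\Lambda_\sigma(G)$; for $x\in C^*_r(G,\sigma)$, $\widehat x=x\delta_e$. For $\varphi:G\to\mathbb{C}$, $M_\varphi$ is the linear map with $M_\varphi(\Lambda_\sigma(g))=\varphi(g)\Lambda_\sigma(g)$ (extended to $C^*_r(G,\sigma)$ when bounded). $MCF(G,\sigma)$ is the set of $\varphi$ such that $\sum_g\varphi(g)\widehat x(g)\Lambda_\sigma(g)$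 converges in operator norm (as a net of finite partial sums) for all $x\in C^*_r(G,\sigma)$. A net $\{\varphi_\alpha\}$ is a Fourier summing net for $(G,\sigma)$ if each $\varphi_\alpha\in MCF(G,\sigma)$ and $M_{\varphi_\alpha}(x)\to x$ in operator norm for every $x$; it is bounded if $\sup_\alpha\|M_{\varphi_\alpha}\|<\infty$. *)

theory Defs
  imports "HOL-Analysis.Analysis"
begin

text \<open>The group Z^N is represented by the carrier set ZN N of integer sequences
  vanishing at indices >= N, with pointwise addition.\<close>

type_synonym grp = "nat \<Rightarrow> int"
type_synonym vec = "grp \<Rightarrow> complex"
type_synonym op = "vec \<Rightarrow> vec"

definition ZN :: "nat \<Rightarrow> grp set" where
  "ZN N = {g. \<forall>i\<ge>N. g i = 0}"

definition gadd :: "grp \<Rightarrow> grp \<Rightarrow> grp" where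
  "gadd g h = (\<lambda>i. g i + h i)"

definition gneg :: "grp \<Rightarrow> grp" where
  "gneg g = (\<lambda>i. - g i)"

definition gzero :: grp where
  "gzero = (\<lambda>i. 0)"

definition normalized_cocycle :: "nat \<Rightarrow> (grp \<Rightarrow> grp \<Rightarrow> complex) \<Rightarrow> bool" where
  "normalized_cocycle N \<sigma> \<longleftrightarrow>
     (\<forall>g\<in>ZN N. \<forall>h\<in>ZN N. norm (\<sigma> g h) = 1) \<and>
     (\<forall>g\<in>ZN N. \<forall>h\<in>ZN N. \<forall>k\<in>ZN N.
        \<sigma> g h * \<sigma> (gadd g h) k = \<sigma> h k * \<sigma> g (gadd h k)) \<and>
     (\<forall>g\<in>ZN N. \<sigma> g gzero = 1 \<and> \<sigma> gzero g = 1)"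

definition l2 :: "nat \<Rightarrow> vec set" where
  "l2 N = {\<xi>. (\<forall>g. g \<notin> ZN N \<longrightarrow> \<xi> g = 0) \<and> (\<lambda>g. (norm (\<xi> g))\<^sup>2) summable_on ZN N}"

definition l2norm :: "nat \<Rightarrow> vec \<Rightarrow> real" where
  "l2norm N \<xi> = sqrt (infsum (\<lambda>g. (norm (\<xi> g))\<^sup>2) (ZN N))"

definition bounded_op :: "nat \<Rightarrow> op \<Rightarrow> bool" where
  "bounded_op N T \<longleftrightarrow>
     (\<forall>\<xi>\<in>l2 N. T \<xi> \<in> l2 N) \<and>
     (\<forall>\<xi>\<in>l2 N. \<forall>\<eta>\<in>l2 N. \<forall>a::complex.
        T (\<lambda>g. a * \<xi> g + \<eta> g) = (\<lambda>g. a * T \<xi> g + T \<eta> g)) \<and>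
     (\<exists>C. \<forall>\<xi>\<in>l2 N. l2norm N (T \<xi>) \<le> C * l2norm N \<xi>)"

text \<open>Operator norm (meaningful for bounded operators).\<close>
definition opnorm :: "nat \<Rightarrow> op \<Rightarrow> real" where
  "opnorm N T = Sup {l2norm N (T \<xi>) | \<xi>. \<xi> \<in> l2 N \<and> l2norm N \<xi> \<le> 1}"

definition opdiff :: "op \<Rightarrow> op \<Rightarrow> op" where
  "opdiff S T = (\<lambda>\<xi> g. S \<xi> g - T \<xi> g)"

definition Lam :: "nat \<Rightarrow> (grp \<Rightarrow> grp \<Rightarrow> complex) \<Rightarrow> grp \<Rightarrow> op" where
  "Lam N \<sigma> g \<xi> = (\<lambda>h. if h \<in> ZN N then \<sigma> g (gadd (gneg g) h) * \<xi> (gadd (gneg g) h) else 0)"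

definition lincomb :: "nat \<Rightarrow> (grp \<Rightarrow> grp \<Rightarrow> complex) \<Rightarrow> (grp \<Rightarrow> complex) \<Rightarrow> grp set \<Rightarrow> op" where
  "lincomb N \<sigma> c F = (\<lambda>\<xi> h. \<Sum>g\<in>F. c g * Lam N \<sigma> g \<xi> h)"

definition Cstar_r :: "nat \<Rightarrow> (grp \<Rightarrow> grp \<Rightarrow> complex) \<Rightarrow> op set" where
  "Cstar_r N \<sigma> = {x. bounded_op N x \<and>
     (\<forall>\<epsilon>>0. \<exists>F c. finite F \<and> F \<subseteq> ZN N \<and> opnorm N (opdiff x (lincomb N \<sigma> c F)) < \<epsilon>)}"

definition delta_e :: vec where
  "delta_e = (\<lambda>h. if h = gzero then 1 else 0)"

definition xhat :: "op \<Rightarrow> grp \<Rightarrow> complex" where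
  "xhat x = x delta_e"

definition fourier_lim :: "nat \<Rightarrow> (grp \<Rightarrow> grp \<Rightarrow> complex) \<Rightarrow> (grp \<Rightarrow> complex) \<Rightarrow> op \<Rightarrow> op \<Rightarrow> bool" where
  "fourier_lim N \<sigma> \<phi> x y \<longleftrightarrow> bounded_op N y \<and>
     ((\<lambda>F. opnorm N (opdiff y (lincomb N \<sigma> (\<lambda>g. \<phi> g * xhat x g) F))) \<longlongrightarrow> 0)
       (finite_subsets_at_top (ZN N))"

definition MCF :: "nat \<Rightarrow> (grp \<Rightarrow> grp \<Rightarrow> complex) \<Rightarrow> (grp \<Rightarrow> complex) set" where
  "MCF N \<sigma> = {\<phi>. \<forall>x\<in>Cstar_r N \<sigma>. \<exists>y. fourier_lim N \<sigma> \<phi> x y}"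

text \<open>The multiplier M_phi on C*_r (defined when phi is in MCF).\<close>
definition Mphi :: "nat \<Rightarrow> (grp \<Rightarrow> grp \<Rightarrow> complex) \<Rightarrow> (grp \<Rightarrow> complex) \<Rightarrow> op \<Rightarrow> op" where
  "Mphi N \<sigma> \<phi> x = (SOME y. fourier_lim N \<sigma> \<phi> x y)"

definition bounded_fourier_summing_net ::
  "nat \<Rightarrow> (grp \<Rightarrow> grp \<Rightarrow> complex) \<Rightarrow> ('i \<Rightarrow> grp \<Rightarrow> complex) \<Rightarrow> 'i set \<Rightarrow> 'i filter \<Rightarrow> bool" where
  "bounded_fourier_summing_net N \<sigma> \<phi> I F \<longleftrightarrow>
     (\<forall>a\<in>I. \<phi> a \<in> MCF N \<sigma>) \<and>
     (\<forall>x\<in>Cstar_r N \<sigma>. ((\<lambda>a. opnorm N (opdiff (Mphi N \<sigma> (\<phi> a) x) x)) \<longlongrightarrow> 0) F) \<and>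
     (\<exists>C. \<forall>a\<in>I. \<forall>x\<in>Cstar_r N \<sigma>. opnorm N (Mphi N \<sigma> (\<phi> a) x) \<le> C * opnorm N x)"

definition L1 :: "nat \<Rightarrow> grp \<Rightarrow> real" where
  "L1 N g = (\<Sum>i<N. \<bar>real_of_int (g i)\<bar>)"

definition L2 :: "nat \<Rightarrow> grp \<Rightarrow> real" where
  "L2 N g = sqrt (\<Sum>i<N. (real_of_int (g i))\<^sup>2)"

definition L2sq :: "nat \<Rightarrow> grp \<Rightarrow> real" where
  "L2sq N g = (\<Sum>i<N. (real_of_int (g i))\<^sup>2)"

end

theory Submission
  imports Defs "HOL-Real_Asymp.Real_Asymp"
begin

text \<open>
  Since \<open>r\<^bsup>L\<^esup>\<close> is summable over \<open>\<int>\<^sup>N\<close> and \<open>\<bar>x\<^sup>^(g)\<bar> \<le> \<parallel>x\<parallel>\<close>, the series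
  \<open>\<Sum>\<^sub>g r\<^bsup>L(g)\<^esup> x\<^sup>^(g) \<Lambda>\<^sub>\<sigma>(g)\<close> converges absolutely in operator norm, which identifies
  \<open>M\<^sub>\<phi>\<^sub>r x\<close>. The matrix of \<open>x \<in> C\<^sup>*\<^sub>r(G,\<sigma>)\<close> in the standard basis is
  \<open>(x\<^sup>^(h - k) \<sigma>(h - k, k))\<^sub>h\<^sub>,\<^sub>k\<close>, so the matrix of \<open>M\<^sub>\<phi>\<^sub>r x\<close> is its entrywise (Schur)
  product with the kernel \<open>r\<^bsup>L(h - k)\<^esup>\<close>, and \<open>\<parallel>M\<^sub>\<phi>\<^sub>r\<parallel> \<le> 1\<close> as soon as this kernel is a
  Schur multiplier of norm at most 1. For \<open>\<bar>\<cdot>\<bar>\<^sub>2\<^sup>2\<close> the kernel is a product of Gaussians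
  \<open>exp(-u (h\<^sub>i - k\<^sub>i)\<^sup>2)\<close>, each the Gram kernel of a family of unit vectors. For \<open>\<bar>\<cdot>\<bar>\<^sub>2\<close>,
  \<open>exp(-t \<bar>h - k\<bar>\<^sub>2)\<close> is a pointwise limit of normalised kernels \<open>exp(\<tau>(1 - \<surd>(1 - q G)))\<close>
  with \<open>G\<close> Gaussian, whose power series in \<open>G\<close> have nonnegative coefficients; for
  \<open>\<bar>\<cdot>\<bar>\<^sub>1\<close> one takes products of one-dimensional instances. The uniform bound and
  \<open>r\<^bsup>L(g)\<^esup> \<rightarrow> 1\<close> then give \<open>M\<^sub>\<phi>\<^sub>r x \<rightarrow> x\<close> by approximating \<open>x\<close> with finite linear
  combinations of the \<open>\<Lambda>\<^sub>\<sigma>(g)\<close>.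
\<close>

section \<open>The group \<open>\<int>\<^sup>N\<close>\<close>

lemma gadd_apply: "gadd g h i = g i + h i"
  by (simp add: gadd_def)

lemma gneg_apply: "gneg g i = - g i"
  by (simp add: gneg_def)

lemma gzero_apply [simp]: "gzero i = 0"
  by (simp add: gzero_def)

lemma gzero_ZN [simp]: "gzero \<in> ZN N"
  by (simp add: ZN_def)

lemma gadd_ZN [simp]: "g \<in> ZN N \<Longrightarrow> h \<in> ZN N \<Longrightarrow> gadd g h \<in> ZN N"
  by (simp add: ZN_def gadd_apply)

lemma gneg_ZN [simp]: "g \<in> ZN N \<Longrightarrow> gneg g \<in> ZN N"
  by (simp add: ZN_def gneg_apply)

lemma gadd_gneg_cancel_left [simp]: "gadd g (gadd (gneg g) h) = h"
  by (rule ext) (simp add: gadd_apply gneg_apply)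

lemma gadd_gneg_cancel_left' [simp]: "gadd (gneg g) (gadd g h) = h"
  by (rule ext) (simp add: gadd_apply gneg_apply)

lemma gadd_gzero [simp]: "gadd g gzero = g" "gadd gzero g = g"
  by (rule ext, simp add: gadd_apply)+

lemma gadd_gneg_self [simp]: "gadd (gneg g) g = gzero" "gadd g (gneg g) = gzero"
  by (rule ext, simp add: gadd_apply gneg_apply)+

lemma gdiff_eq_iff: "gadd (gneg g) h = k \<longleftrightarrow> h = gadd g k"
  by (metis gadd_gneg_cancel_left gadd_gneg_cancel_left')

lemma gdiff_eq_iff': "gadd (gneg g) h = k \<longleftrightarrow> g = gadd (gneg k) h"
  unfolding fun_eq_iff gadd_apply gneg_apply by (smt (verit))

lemma gdiff_gdiff: "gadd (gneg (gadd (gneg k) h)) h = k"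
  by (rule ext) (simp add: gadd_apply gneg_apply)

lemma gdiff_gdiff_eq_gzero_iff: "gadd (gneg g) (gadd (gneg k) h) = gzero \<longleftrightarrow> gadd (gneg g) h = k"
  by (auto simp: fun_eq_iff gadd_apply gneg_apply algebra_simps)

lemma normalized_cocycle_norm:
  "normalized_cocycle N \<sigma> \<Longrightarrow> g \<in> ZN N \<Longrightarrow> h \<in> ZN N \<Longrightarrow> norm (\<sigma> g h) = 1"
  by (simp add: normalized_cocycle_def)

lemma normalized_cocycle_gzero:
  "normalized_cocycle N \<sigma> \<Longrightarrow> g \<in> ZN N \<Longrightarrow> \<sigma> g gzero = 1"
  "normalized_cocycle N \<sigma> \<Longrightarrow> g \<in> ZN N \<Longrightarrow> \<sigma> gzero g = 1"
  by (simp_all add: normalized_cocycle_def)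

section \<open>The Hilbert space \<open>\<ell>\<^sup>2(\<int>\<^sup>N)\<close>\<close>

abbreviation l2norm_on :: "grp set \<Rightarrow> vec \<Rightarrow> real" where
  "l2norm_on F \<xi> \<equiv> L2_set (\<lambda>g. cmod (\<xi> g)) F"

lemma l2_zero_outside: "\<xi> \<in> l2 N \<Longrightarrow> g \<notin> ZN N \<Longrightarrow> \<xi> g = 0"
  by (simp add: l2_def)

lemma l2_summable: "\<xi> \<in> l2 N \<Longrightarrow> (\<lambda>g. (cmod (\<xi> g))\<^sup>2) summable_on ZN N"
  by (simp add: l2_def)

lemma l2norm_nonneg [simp]: "0 \<le> l2norm N \<xi>"
  unfolding l2norm_def by (simp add: infsum_nonneg)

lemma l2norm_power2: "(l2norm N \<xi>)\<^sup>2 = infsum (\<lambda>g. (cmod (\<xi> g))\<^sup>2) (ZN N)"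
  unfolding l2norm_def by (simp add: infsum_nonneg)

lemma l2norm_on_le_l2norm:
  assumes "\<xi> \<in> l2 N" "finite F"
  shows "l2norm_on F \<xi> \<le> l2norm N \<xi>"
proof -
  have "(\<Sum>g\<in>F. (cmod (\<xi> g))\<^sup>2) = (\<Sum>g\<in>F \<inter> ZN N. (cmod (\<xi> g))\<^sup>2)"
    using assms by (intro sum.mono_neutral_right) (auto simp: l2_zero_outside)
  also have "\<dots> \<le> (l2norm N \<xi>)\<^sup>2"
    unfolding l2norm_power2 using assms by (intro finite_sum_le_infsum l2_summable) auto
  finally show ?thesis
    unfolding L2_set_def by (intro real_le_lsqrt) auto
qed

lemma l2I:
  assumes "\<And>g. g \<notin> ZN N \<Longrightarrow> \<xi> g = 0"
    and "\<And>F. finite F \<Longrightarrow> F \<subseteq> ZN N \<Longrightarrow> l2norm_on F \<xi> \<le> B"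
  shows "\<xi> \<in> l2 N \<and> l2norm N \<xi> \<le> B"
proof -
  have B: "0 \<le> B" using assms(2)[of "{}"] by simp
  have sums_le: "(\<Sum>g\<in>F. (cmod (\<xi> g))\<^sup>2) \<le> B\<^sup>2" if "finite F" "F \<subseteq> ZN N" for F
    using assms(2)[OF that] by (intro sqrt_le_D) (simp add: L2_set_def)
  have summable: "(\<lambda>g. (cmod (\<xi> g))\<^sup>2) summable_on ZN N"
    by (rule nonneg_bdd_above_summable_on) (use sums_le in \<open>auto simp: bdd_above_def\<close>)
  have "infsum (\<lambda>g. (cmod (\<xi> g))\<^sup>2) (ZN N) \<le> B\<^sup>2"
    by (rule infsum_le_finite_sums[OF summable]) (use sums_le in auto)
  then have "l2norm N \<xi> \<le> B"
    unfolding l2norm_def using B by (intro real_le_lsqrt)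
  then show ?thesis using summable assms(1) by (auto simp: l2_def)
qed

lemma l2_norm_apply_le: "\<xi> \<in> l2 N \<Longrightarrow> cmod (\<xi> h) \<le> l2norm N \<xi>"
  using l2norm_on_le_l2norm[of \<xi> N "{h}"] by (simp add: L2_set_def)

lemma l2norm_le_0_imp_zero: "\<xi> \<in> l2 N \<Longrightarrow> l2norm N \<xi> \<le> 0 \<Longrightarrow> \<xi> = (\<lambda>_. 0)"
  using l2_norm_apply_le by (metis norm_le_zero_iff order_trans)

lemma l2_lincomb:
  assumes "\<xi> \<in> l2 N" "\<eta> \<in> l2 N"
  shows "(\<lambda>g. a * \<xi> g + \<eta> g) \<in> l2 N \<and>
    l2norm N (\<lambda>g. a * \<xi> g + \<eta> g) \<le> cmod a * l2norm N \<xi> + l2norm N \<eta>"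
proof (rule l2I)
  show "g \<notin> ZN N \<Longrightarrow> a * \<xi> g + \<eta> g = 0" for g
    by (simp add: l2_zero_outside[OF assms(1)] l2_zero_outside[OF assms(2)])
  fix F assume F: "finite F" "F \<subseteq> ZN N"
  have "l2norm_on F (\<lambda>g. a * \<xi> g + \<eta> g) \<le> L2_set (\<lambda>g. cmod a * cmod (\<xi> g) + cmod (\<eta> g)) F"
    by (rule L2_set_mono) (auto simp: norm_triangle_le norm_mult)
  also have "\<dots> \<le> L2_set (\<lambda>g. cmod a * cmod (\<xi> g)) F + l2norm_on F \<eta>"
    by (rule L2_set_triangle_ineq)
  also have "\<dots> = cmod a * l2norm_on F \<xi> + l2norm_on F \<eta>"
    by (simp add: L2_set_right_distrib)
  also have "\<dots> \<le> cmod a * l2norm N \<xi> + l2norm N \<eta>"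
    using l2norm_on_le_l2norm[OF assms(1) F(1)] l2norm_on_le_l2norm[OF assms(2) F(1)]
    by (intro add_mono mult_left_mono) auto
  finally show "l2norm_on F (\<lambda>g. a * \<xi> g + \<eta> g) \<le> cmod a * l2norm N \<xi> + l2norm N \<eta>" .
qed

lemma l2_zero [simp]: "(\<lambda>_. 0) \<in> l2 N" "l2norm N (\<lambda>_. 0) = 0"
proof -
  have "(\<lambda>_. 0::complex) \<in> l2 N \<and> l2norm N (\<lambda>_. 0) \<le> 0"
    by (rule l2I) (auto simp: L2_set_def)
  then show "(\<lambda>_. 0) \<in> l2 N" "l2norm N (\<lambda>_. 0) = 0"
    using l2norm_nonneg by (auto intro: antisym)
qed

lemma l2_add:
  "\<xi> \<in> l2 N \<Longrightarrow> \<eta> \<in> l2 N \<Longrightarrow>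
    (\<lambda>g. \<xi> g + \<eta> g) \<in> l2 N \<and> l2norm N (\<lambda>g. \<xi> g + \<eta> g) \<le> l2norm N \<xi> + l2norm N \<eta>"
  using l2_lincomb[of \<xi> N \<eta> 1] by simp

lemma l2_scale:
  "\<xi> \<in> l2 N \<Longrightarrow> (\<lambda>g. a * \<xi> g) \<in> l2 N \<and> l2norm N (\<lambda>g. a * \<xi> g) \<le> cmod a * l2norm N \<xi>"
  using l2_lincomb[of \<xi> N "\<lambda>_. 0" a] by simp

lemma l2_diff:
  "\<xi> \<in> l2 N \<Longrightarrow> \<eta> \<in> l2 N \<Longrightarrow>
    (\<lambda>g. \<xi> g - \<eta> g) \<in> l2 N \<and> l2norm N (\<lambda>g. \<xi> g - \<eta> g) \<le> l2norm N \<xi> + l2norm N \<eta>"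
  using l2_lincomb[of \<eta> N \<xi> "-1"] by simp

lemma l2norm_diff_commute: "l2norm N (\<lambda>g. \<xi> g - \<eta> g) = l2norm N (\<lambda>g. \<eta> g - \<xi> g)"
  unfolding l2norm_def by (simp add: norm_minus_commute)

lemma l2_tendsto_le:
  assumes lim: "\<And>h. ((\<lambda>i. v i h) \<longlongrightarrow> w h) F" and "F \<noteq> bot"
    and bound: "eventually (\<lambda>i. v i \<in> l2 N \<and> l2norm N (v i) \<le> B) F"
    and "\<And>g. g \<notin> ZN N \<Longrightarrow> w g = 0"
  shows "w \<in> l2 N \<and> l2norm N w \<le> B"
proof (rule l2I)
  fix H :: "grp set" assume H: "finite H" "H \<subseteq> ZN N"
  have "((\<lambda>i. l2norm_on H (v i)) \<longlongrightarrow> l2norm_on H w) F"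
    unfolding L2_set_def by (intro tendsto_intros lim)
  moreover have "eventually (\<lambda>i. l2norm_on H (v i) \<le> B) F"
    using bound by eventually_elim (use l2norm_on_le_l2norm H in force)
  ultimately show "l2norm_on H w \<le> B"
    using \<open>F \<noteq> bot\<close> by (simp add: tendsto_upperbound)
qed (use assms in auto)

definition trunc :: "grp set \<Rightarrow> vec \<Rightarrow> vec" where
  "trunc F \<xi> = (\<lambda>g. if g \<in> F then \<xi> g else 0)"

lemma trunc_l2: "\<xi> \<in> l2 N \<Longrightarrow> trunc F \<xi> \<in> l2 N"
proof (rule conjunct1[OF l2I])
  fix H assume "\<xi> \<in> l2 N" "finite H" "H \<subseteq> ZN N"
  moreover have "l2norm_on H (trunc F \<xi>) \<le> l2norm_on H \<xi>"
    by (rule L2_set_mono) (auto simp: trunc_def)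
  ultimately show "l2norm_on H (trunc F \<xi>) \<le> l2norm N \<xi>"
    using l2norm_on_le_l2norm by (meson order_trans)
qed (auto simp: trunc_def l2_zero_outside)

lemma trunc_finite_l2:
  assumes K: "finite K" "K \<subseteq> ZN N"
  shows "trunc K \<zeta> \<in> l2 N \<and> l2norm N (trunc K \<zeta>) \<le> l2norm_on K \<zeta>"
proof (rule l2I)
  fix F assume F: "finite F" "F \<subseteq> ZN N"
  have "l2norm_on F (trunc K \<zeta>) = l2norm_on (F \<inter> K) \<zeta>"
    unfolding L2_set_def
    by (intro arg_cong[where f=sqrt] sum.mono_neutral_cong_right) (auto simp: trunc_def F)
  also have "\<dots> \<le> l2norm_on K \<zeta>"
    unfolding L2_set_def using K(1) by (intro real_sqrt_le_mono sum_mono2) auto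
  finally show "l2norm_on F (trunc K \<zeta>) \<le> l2norm_on K \<zeta>" .
qed (use K in \<open>auto simp: trunc_def\<close>)

lemma trunc_approx:
  assumes "\<xi> \<in> l2 N" "e > 0"
  obtains F where "finite F" "F \<subseteq> ZN N" "l2norm N (\<lambda>g. \<xi> g - trunc F \<xi> g) \<le> e"
proof -
  let ?f = "\<lambda>g. (cmod (\<xi> g))\<^sup>2"
  let ?S = "infsum ?f (ZN N)"
  have hs: "(?f has_sum ?S) (ZN N)"
    using l2_summable[OF assms(1)] by (rule has_sum_infsum)
  then have "eventually (\<lambda>F. dist (sum ?f F) ?S < e\<^sup>2) (finite_subsets_at_top (ZN N))"
    using assms(2) unfolding has_sum_def by (intro tendstoD) auto
  then obtain F where F: "finite F" "F \<subseteq> ZN N" "dist (sum ?f F) ?S < e\<^sup>2"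
    by (auto simp: eventually_finite_subsets_at_top)
  have "l2norm N (\<lambda>g. \<xi> g - trunc F \<xi> g) \<le> e"
  proof (rule conjunct2[OF l2I])
    show "g \<notin> ZN N \<Longrightarrow> \<xi> g - trunc F \<xi> g = 0" for g
      using assms by (simp add: trunc_def l2_zero_outside)
    fix H assume H: "finite H" "H \<subseteq> ZN N"
    have "(\<Sum>g\<in>H. (cmod (\<xi> g - trunc F \<xi> g))\<^sup>2) = sum ?f (H - F)"
      by (rule sum.mono_neutral_cong_right) (auto simp: trunc_def H)
    also have "\<dots> = sum ?f (H \<union> F) - sum ?f F"
      using sum_diff[of "H \<union> F" F ?f] H F by (simp add: Un_Diff)
    also have "sum ?f (H \<union> F) \<le> ?S"
      using H F by (intro finite_sum_le_has_sum[OF hs]) auto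
    finally have "(\<Sum>g\<in>H. (cmod (\<xi> g - trunc F \<xi> g))\<^sup>2) \<le> e\<^sup>2"
      using F(3) by (simp add: dist_real_def)
    then show "l2norm_on H (\<lambda>g. \<xi> g - trunc F \<xi> g) \<le> e"
      unfolding L2_set_def using assms(2) by (intro real_le_lsqrt) auto
  qed
  then show ?thesis using F that by blast
qed

section \<open>Bounded operators\<close>

lemma bounded_op_l2: "bounded_op N T \<Longrightarrow> \<xi> \<in> l2 N \<Longrightarrow> T \<xi> \<in> l2 N"
  by (simp add: bounded_op_def)

lemma bounded_op_lincomb:
  "bounded_op N T \<Longrightarrow> \<xi> \<in> l2 N \<Longrightarrow> \<eta> \<in> l2 N \<Longrightarrow>
    T (\<lambda>g. a * \<xi> g + \<eta> g) = (\<lambda>g. a * T \<xi> g + T \<eta> g)"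
  by (simp add: bounded_op_def)

lemma bounded_op_zero:
  assumes "bounded_op N T"
  shows "T (\<lambda>_. 0) = (\<lambda>_. 0)"
proof -
  have "T (\<lambda>_. 0) = (\<lambda>g. T (\<lambda>_. 0) g + T (\<lambda>_. 0) g)"
    using bounded_op_lincomb[OF assms l2_zero(1) l2_zero(1), of 1] by simp
  then show ?thesis by (simp add: fun_eq_iff)
qed

lemma bounded_op_scale:
  "bounded_op N T \<Longrightarrow> \<xi> \<in> l2 N \<Longrightarrow> T (\<lambda>g. a * \<xi> g) = (\<lambda>g. a * T \<xi> g)"
  using bounded_op_lincomb[of N T \<xi> "\<lambda>_. 0" a] bounded_op_zero[of N T] by simp

lemma bounded_op_add:
  "bounded_op N T \<Longrightarrow> \<xi> \<in> l2 N \<Longrightarrow> \<eta> \<in> l2 N \<Longrightarrow> T (\<lambda>g. \<xi> g + \<eta> g) = (\<lambda>g. T \<xi> g + T \<eta> g)"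
  using bounded_op_lincomb[of N T \<xi> \<eta> 1] by simp

lemma bdd_above_opnorm_set:
  assumes "bounded_op N T"
  shows "bdd_above {l2norm N (T \<xi>) | \<xi>. \<xi> \<in> l2 N \<and> l2norm N \<xi> \<le> 1}"
proof -
  obtain C where C: "\<forall>\<xi>\<in>l2 N. l2norm N (T \<xi>) \<le> C * l2norm N \<xi>"
    using assms by (auto simp: bounded_op_def)
  have "l2norm N (T \<xi>) \<le> max C 0" if "\<xi> \<in> l2 N" "l2norm N \<xi> \<le> 1" for \<xi>
  proof -
    have "l2norm N (T \<xi>) \<le> max C 0 * l2norm N \<xi>"
      using C that by (metis max.cobounded1 l2norm_nonneg mult_right_mono order_trans)
    also have "\<dots> \<le> max C 0" using that by (simp add: mult_left_le)
    finally show ?thesis .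
  qed
  then show ?thesis by (auto simp: bdd_above_def)
qed

lemma opnorm_bound:
  assumes T: "bounded_op N T" and \<xi>: "\<xi> \<in> l2 N"
  shows "l2norm N (T \<xi>) \<le> opnorm N T * l2norm N \<xi>"
proof (cases "l2norm N \<xi> = 0")
  case True
  then show ?thesis using l2norm_le_0_imp_zero[OF \<xi>] bounded_op_zero[OF T] by simp
next
  case False
  define n where "n = l2norm N \<xi>"
  have n: "n > 0" using False l2norm_nonneg[of N \<xi>] unfolding n_def by linarith
  define \<eta> where "\<eta> = (\<lambda>g. complex_of_real (1/n) * \<xi> g)"
  have \<eta>: "\<eta> \<in> l2 N" "l2norm N \<eta> \<le> 1"
    using l2_scale[OF \<xi>, of "complex_of_real (1/n)"] n unfolding \<eta>_def n_def[symmetric]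
    by (auto simp: norm_divide)
  have "\<xi> = (\<lambda>g. complex_of_real n * \<eta> g)" using n by (auto simp: \<eta>_def)
  then have "T \<xi> = (\<lambda>g. complex_of_real n * T \<eta> g)"
    using bounded_op_scale[OF T \<eta>(1)] by metis
  then have "l2norm N (T \<xi>) \<le> n * l2norm N (T \<eta>)"
    using l2_scale[OF bounded_op_l2[OF T \<eta>(1)], of "complex_of_real n"] n by simp
  also have "l2norm N (T \<eta>) \<le> opnorm N T"
    unfolding opnorm_def using \<eta> by (intro cSup_upper bdd_above_opnorm_set T) auto
  finally show ?thesis using n by (simp add: n_def mult.commute)
qed

lemma opnorm_le:
  assumes "\<And>\<xi>. \<xi> \<in> l2 N \<Longrightarrow> l2norm N (T \<xi>) \<le> B * l2norm N \<xi>" "0 \<le> B"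
  shows "opnorm N T \<le> B"
  unfolding opnorm_def
proof (rule cSup_least)
  show "{l2norm N (T \<xi>) |\<xi>. \<xi> \<in> l2 N \<and> l2norm N \<xi> \<le> 1} \<noteq> {}"
    using l2_zero by fastforce
next
  fix x assume "x \<in> {l2norm N (T \<xi>) |\<xi>. \<xi> \<in> l2 N \<and> l2norm N \<xi> \<le> 1}"
  then obtain \<xi> where "x = l2norm N (T \<xi>)" "\<xi> \<in> l2 N" "l2norm N \<xi> \<le> 1" by blast
  then show "x \<le> B"
    using assms(1)[of \<xi>] mult_left_mono[of "l2norm N \<xi>" 1 B] assms(2) by auto
qed

lemma opnorm_nonneg:
  assumes "bounded_op N T"
  shows "0 \<le> opnorm N T"
proof -
  have "0 \<le> l2norm N (T (\<lambda>_. 0))" by simp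
  also have "\<dots> \<le> opnorm N T"
    unfolding opnorm_def
    by (intro cSup_upper bdd_above_opnorm_set assms) (auto intro: exI[of _ "\<lambda>_. 0"])
  finally show ?thesis .
qed

lemma opnorm_cong: "(\<And>\<xi>. \<xi> \<in> l2 N \<Longrightarrow> S \<xi> = T \<xi>) \<Longrightarrow> opnorm N S = opnorm N T"
  unfolding opnorm_def by (metis (no_types, lifting))

lemma opdiff_apply: "opdiff S T \<xi> = (\<lambda>g. S \<xi> g - T \<xi> g)"
  by (simp add: opdiff_def)

lemma bounded_op_opdiff:
  assumes S: "bounded_op N S" and T: "bounded_op N T"
  shows "bounded_op N (opdiff S T)"
  unfolding bounded_op_def opdiff_apply
proof (intro conjI ballI allI exI)
  fix \<xi> assume \<xi>: "\<xi> \<in> l2 N"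
  show "(\<lambda>g. S \<xi> g - T \<xi> g) \<in> l2 N"
    using l2_diff[OF bounded_op_l2[OF S \<xi>] bounded_op_l2[OF T \<xi>]] by simp
  have "l2norm N (\<lambda>g. S \<xi> g - T \<xi> g) \<le> l2norm N (S \<xi>) + l2norm N (T \<xi>)"
    using l2_diff[OF bounded_op_l2[OF S \<xi>] bounded_op_l2[OF T \<xi>]] by simp
  also have "\<dots> \<le> (opnorm N S + opnorm N T) * l2norm N \<xi>"
    using opnorm_bound[OF S \<xi>] opnorm_bound[OF T \<xi>] by (simp add: algebra_simps)
  finally show "l2norm N (\<lambda>g. S \<xi> g - T \<xi> g) \<le> (opnorm N S + opnorm N T) * l2norm N \<xi>" .
next
  fix \<xi> \<eta> a assume "\<xi> \<in> l2 N" "\<eta> \<in> l2 N"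
  then show "(\<lambda>g. S (\<lambda>g. a * \<xi> g + \<eta> g) g - T (\<lambda>g. a * \<xi> g + \<eta> g) g) =
        (\<lambda>g. a * (S \<xi> g - T \<xi> g) + (S \<eta> g - T \<eta> g))"
    using bounded_op_lincomb[OF S] bounded_op_lincomb[OF T] by (simp add: algebra_simps)
qed

lemma opnorm_opdiff_triangle:
  assumes R: "bounded_op N R" and S: "bounded_op N S" and T: "bounded_op N T"
  shows "opnorm N (opdiff R T) \<le> opnorm N (opdiff R S) + opnorm N (opdiff S T)"
proof (rule opnorm_le)
  show "0 \<le> opnorm N (opdiff R S) + opnorm N (opdiff S T)"
    using opnorm_nonneg[OF bounded_op_opdiff[OF R S]] opnorm_nonneg[OF bounded_op_opdiff[OF S T]]
    by simp
  fix \<xi> assume \<xi>: "\<xi> \<in> l2 N"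
  have "opdiff R T \<xi> = (\<lambda>g. opdiff R S \<xi> g + opdiff S T \<xi> g)"
    by (simp add: opdiff_apply)
  then have "l2norm N (opdiff R T \<xi>) \<le> l2norm N (opdiff R S \<xi>) + l2norm N (opdiff S T \<xi>)"
    using l2_add[OF bounded_op_l2[OF bounded_op_opdiff[OF R S] \<xi>]
        bounded_op_l2[OF bounded_op_opdiff[OF S T] \<xi>]] by simp
  also have "\<dots> \<le> (opnorm N (opdiff R S) + opnorm N (opdiff S T)) * l2norm N \<xi>"
    using opnorm_bound[OF bounded_op_opdiff[OF R S] \<xi>] opnorm_bound[OF bounded_op_opdiff[OF S T] \<xi>]
    by (simp add: algebra_simps)
  finally show "l2norm N (opdiff R T \<xi>) \<le> (opnorm N (opdiff R S) + opnorm N (opdiff S T)) * l2norm N \<xi>" .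
qed

lemma opnorm_opdiff_commute: "opnorm N (opdiff S T) = opnorm N (opdiff T S)"
  unfolding opnorm_def opdiff_apply using l2norm_diff_commute by metis

lemma opnorm_opdiff_le_0_imp_eq:
  assumes S: "bounded_op N S" and T: "bounded_op N T" and "opnorm N (opdiff S T) \<le> 0"
    and \<xi>: "\<xi> \<in> l2 N"
  shows "S \<xi> = T \<xi>"
proof -
  have "l2norm N (opdiff S T \<xi>) \<le> opnorm N (opdiff S T) * l2norm N \<xi>"
    by (rule opnorm_bound[OF bounded_op_opdiff[OF S T] \<xi>])
  also have "\<dots> \<le> 0" using assms(3) by (simp add: mult_nonpos_nonneg)
  finally have "opdiff S T \<xi> = (\<lambda>_. 0)"
    by (rule l2norm_le_0_imp_zero[OF bounded_op_l2[OF bounded_op_opdiff[OF S T] \<xi>]])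
  then show ?thesis by (auto simp: opdiff_apply fun_eq_iff)
qed

lemma opnorm_le_trunc:
  assumes T: "bounded_op N T" and C: "0 \<le> C"
    and bound: "\<And>K \<xi>. finite K \<Longrightarrow> K \<subseteq> ZN N \<Longrightarrow> l2norm N (T (trunc K \<xi>)) \<le> C * l2norm_on K \<xi>"
  shows "opnorm N T \<le> C"
proof (rule opnorm_le[OF _ C])
  fix \<xi> assume \<xi>: "\<xi> \<in> l2 N"
  show "l2norm N (T \<xi>) \<le> C * l2norm N \<xi>"
  proof (rule field_le_epsilon)
    fix e :: real assume e: "0 < e"
    define B where "B = opnorm N T + 1"
    have B: "0 < B" using opnorm_nonneg[OF T] by (simp add: B_def)
    obtain K where K: "finite K" "K \<subseteq> ZN N" and small: "l2norm N (\<lambda>g. \<xi> g - trunc K \<xi> g) \<le> e / B"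
      using trunc_approx[OF \<xi>, of "e / B"] e B by auto
    define \<delta> where "\<delta> = (\<lambda>g. \<xi> g - trunc K \<xi> g)"
    have t: "trunc K \<xi> \<in> l2 N" using trunc_l2[OF \<xi>] .
    have \<delta>: "\<delta> \<in> l2 N" using l2_diff[OF \<xi> t] by (simp add: \<delta>_def)
    have "T \<xi> = T (\<lambda>g. trunc K \<xi> g + \<delta> g)" by (simp add: \<delta>_def)
    also have "\<dots> = (\<lambda>g. T (trunc K \<xi>) g + T \<delta> g)"
      by (rule bounded_op_add[OF T t \<delta>])
    finally have "l2norm N (T \<xi>) \<le> l2norm N (T (trunc K \<xi>)) + l2norm N (T \<delta>)"
      using l2_add[OF bounded_op_l2[OF T t] bounded_op_l2[OF T \<delta>]] by simp
    also have "\<dots> \<le> C * l2norm N \<xi> + B * (e / B)"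
    proof (rule add_mono)
      show "l2norm N (T (trunc K \<xi>)) \<le> C * l2norm N \<xi>"
        using bound[OF K, of \<xi>] l2norm_on_le_l2norm[OF \<xi> K(1)] C
        by (meson mult_left_mono order_trans)
      have "l2norm N (T \<delta>) \<le> opnorm N T * l2norm N \<delta>"
        by (rule opnorm_bound[OF T \<delta>])
      also have "\<dots> \<le> B * (e / B)"
        using small opnorm_nonneg[OF T] unfolding \<delta>_def B_def
        by (intro mult_mono) auto
      finally show "l2norm N (T \<delta>) \<le> B * (e / B)" .
    qed
    finally show "l2norm N (T \<xi>) \<le> C * l2norm N \<xi> + e" using B by simp
  qed
qed

section \<open>Absolutely convergent series in the \<open>\<Lambda>\<^sub>\<sigma>(g)\<close>\<close>

definition Lam_series :: "nat \<Rightarrow> (grp \<Rightarrow> grp \<Rightarrow> complex) \<Rightarrow> (grp \<Rightarrow> complex) \<Rightarrow> op" where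
  "Lam_series N \<sigma> c = (\<lambda>\<xi> h. infsum (\<lambda>g. c g * Lam N \<sigma> g \<xi> h) (ZN N))"

definition abs_sums_le :: "nat \<Rightarrow> (grp \<Rightarrow> complex) \<Rightarrow> real \<Rightarrow> bool" where
  "abs_sums_le N c B \<longleftrightarrow> (\<forall>F. finite F \<longrightarrow> F \<subseteq> ZN N \<longrightarrow> (\<Sum>g\<in>F. cmod (c g)) \<le> B)"

lemma abs_sums_le_summable: "abs_sums_le N c B \<Longrightarrow> (\<lambda>g. cmod (c g)) summable_on ZN N"
  by (rule nonneg_bdd_above_summable_on) (auto simp: abs_sums_le_def bdd_above_def)

lemma abs_sums_le_infsum:
  "(\<lambda>g. cmod (c g)) summable_on ZN N \<Longrightarrow> abs_sums_le N c (infsum (\<lambda>g. cmod (c g)) (ZN N))"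
  unfolding abs_sums_le_def by (auto intro!: finite_sum_le_infsum)

lemma abs_sums_le_nonneg: "abs_sums_le N c B \<Longrightarrow> 0 \<le> B"
  unfolding abs_sums_le_def by (metis finite.emptyI empty_subsetI sum.empty)

lemma abs_sums_le_tail:
  assumes c: "(\<lambda>g. cmod (c g)) summable_on ZN N" and F: "finite F" "F \<subseteq> ZN N"
  shows "abs_sums_le N (\<lambda>g. if g \<in> F then 0 else c g)
    (infsum (\<lambda>g. cmod (c g)) (ZN N) - (\<Sum>g\<in>F. cmod (c g)))"
  unfolding abs_sums_le_def
proof (intro allI impI)
  fix H assume H: "finite H" "H \<subseteq> ZN N"
  have "(\<Sum>g\<in>H. cmod (if g \<in> F then 0 else c g)) = (\<Sum>g\<in>H - F. cmod (c g))"
    by (rule sum.mono_neutral_cong_right) (auto simp: H)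
  also have "\<dots> = (\<Sum>g\<in>H \<union> F. cmod (c g)) - (\<Sum>g\<in>F. cmod (c g))"
    using sum_diff[of "H \<union> F" F "\<lambda>g. cmod (c g)"] H F by (simp add: Un_Diff)
  also have "(\<Sum>g\<in>H \<union> F. cmod (c g)) \<le> infsum (\<lambda>g. cmod (c g)) (ZN N)"
    using H F by (intro finite_sum_le_infsum c) auto
  finally show "(\<Sum>g\<in>H. cmod (if g \<in> F then 0 else c g))
      \<le> infsum (\<lambda>g. cmod (c g)) (ZN N) - (\<Sum>g\<in>F. cmod (c g))"
    by simp
qed

lemma Lam_outside: "h \<notin> ZN N \<Longrightarrow> Lam N \<sigma> g \<xi> h = 0"
  by (simp add: Lam_def)

lemma Lam_lincomb: "Lam N \<sigma> g (\<lambda>h. a * \<xi> h + \<eta> h) = (\<lambda>h. a * Lam N \<sigma> g \<xi> h + Lam N \<sigma> g \<eta> h)"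
  by (auto simp: Lam_def fun_eq_iff algebra_simps)

lemma Lam_series_cong:
  "(\<And>g. g \<in> ZN N \<Longrightarrow> c g = d g) \<Longrightarrow> Lam_series N \<sigma> c = Lam_series N \<sigma> d"
  unfolding Lam_series_def by (intro ext infsum_cong) simp

lemma lincomb_eq_Lam_series:
  assumes "finite F" "F \<subseteq> ZN N"
  shows "lincomb N \<sigma> c F \<xi> = Lam_series N \<sigma> (\<lambda>g. if g \<in> F then c g else 0) \<xi>"
proof
  fix h
  have "infsum (\<lambda>g. (if g \<in> F then c g else 0) * Lam N \<sigma> g \<xi> h) (ZN N)
      = infsum (\<lambda>g. c g * Lam N \<sigma> g \<xi> h) F"
    by (rule infsum_cong_neutral) (use assms in auto)
  then show "lincomb N \<sigma> c F \<xi> h = Lam_series N \<sigma> (\<lambda>g. if g \<in> F then c g else 0) \<xi> h"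
    using assms(1) by (simp add: lincomb_def Lam_series_def)
qed

lemma abs_sums_le_finite:
  assumes "finite F"
  shows "abs_sums_le N (\<lambda>g. if g \<in> F then c g else 0) (\<Sum>g\<in>F. cmod (c g))"
  unfolding abs_sums_le_def
proof (intro allI impI)
  fix H :: "grp set" assume "finite H"
  have "(\<Sum>g\<in>H. cmod (if g \<in> F then c g else 0)) = (\<Sum>g\<in>H \<inter> F. cmod (c g))"
    using \<open>finite H\<close> by (intro sum.mono_neutral_cong_right) auto
  also have "\<dots> \<le> (\<Sum>g\<in>F. cmod (c g))"
    using assms by (intro sum_mono2) auto
  finally show "(\<Sum>g\<in>H. cmod (if g \<in> F then c g else 0)) \<le> (\<Sum>g\<in>F. cmod (c g))" .
qed

context
  fixes N :: nat and \<sigma> :: "grp \<Rightarrow> grp \<Rightarrow> complex"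
  assumes cocycle: "normalized_cocycle N \<sigma>"
begin

lemma Lam_l2:
  assumes g: "g \<in> ZN N" and \<xi>: "\<xi> \<in> l2 N"
  shows "Lam N \<sigma> g \<xi> \<in> l2 N \<and> l2norm N (Lam N \<sigma> g \<xi>) \<le> l2norm N \<xi>"
proof (rule l2I)
  fix F assume F: "finite F" "F \<subseteq> ZN N"
  have "l2norm_on F (Lam N \<sigma> g \<xi>) = L2_set (\<lambda>h. cmod (\<xi> (gadd (gneg g) h))) F"
  proof (rule L2_set_cong)
    fix h assume "h \<in> F"
    then have h: "h \<in> ZN N" using F by auto
    then have "norm (\<sigma> g (gadd (gneg g) h)) = 1"
      using g by (intro normalized_cocycle_norm[OF cocycle]) auto
    then show "cmod (Lam N \<sigma> g \<xi> h) = cmod (\<xi> (gadd (gneg g) h))"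
      using h by (simp add: Lam_def norm_mult)
  qed simp
  also have "\<dots> = l2norm_on ((\<lambda>h. gadd (gneg g) h) ` F) \<xi>"
  proof -
    have "inj_on (\<lambda>h. gadd (gneg g) h) F" by (rule inj_onI) (metis gadd_gneg_cancel_left)
    then show ?thesis unfolding L2_set_def by (simp add: sum.reindex)
  qed
  also have "\<dots> \<le> l2norm N \<xi>" using F by (intro l2norm_on_le_l2norm \<xi>) auto
  finally show "l2norm_on F (Lam N \<sigma> g \<xi>) \<le> l2norm N \<xi>" .
qed (rule Lam_outside)

lemma lincomb_l2:
  assumes "finite F" "F \<subseteq> ZN N" "\<xi> \<in> l2 N"
  shows "lincomb N \<sigma> c F \<xi> \<in> l2 N \<and>
    l2norm N (lincomb N \<sigma> c F \<xi>) \<le> (\<Sum>g\<in>F. cmod (c g)) * l2norm N \<xi>"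
  using assms(1,2)
proof (induction F rule: finite_induct)
  case empty
  then show ?case by (simp add: lincomb_def)
next
  case (insert g F)
  have IH: "lincomb N \<sigma> c F \<xi> \<in> l2 N"
    "l2norm N (lincomb N \<sigma> c F \<xi>) \<le> (\<Sum>g\<in>F. cmod (c g)) * l2norm N \<xi>"
    using insert by auto
  have Lam: "Lam N \<sigma> g \<xi> \<in> l2 N" "l2norm N (Lam N \<sigma> g \<xi>) \<le> l2norm N \<xi>"
    using Lam_l2[OF _ assms(3), of g] insert by auto
  have insert_eq: "lincomb N \<sigma> c (insert g F) \<xi> = (\<lambda>h. c g * Lam N \<sigma> g \<xi> h + lincomb N \<sigma> c F \<xi> h)"
    using insert by (simp add: lincomb_def)
  have "l2norm N (lincomb N \<sigma> c (insert g F) \<xi>)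
      \<le> cmod (c g) * l2norm N (Lam N \<sigma> g \<xi>) + l2norm N (lincomb N \<sigma> c F \<xi>)"
    unfolding insert_eq by (rule conjunct2[OF l2_lincomb[OF Lam(1) IH(1)]])
  also have "\<dots> \<le> cmod (c g) * l2norm N \<xi> + (\<Sum>g\<in>F. cmod (c g)) * l2norm N \<xi>"
    using Lam IH by (intro add_mono mult_left_mono) auto
  finally show ?case
    unfolding insert_eq using l2_lincomb[OF Lam(1) IH(1)] insert by (simp add: algebra_simps)
qed

lemma bounded_op_lincomb_Lam:
  assumes "finite F" "F \<subseteq> ZN N"
  shows "bounded_op N (lincomb N \<sigma> c F)"
proof -
  have "lincomb N \<sigma> c F (\<lambda>h. a * \<xi> h + \<eta> h) = (\<lambda>h. a * lincomb N \<sigma> c F \<xi> h + lincomb N \<sigma> c F \<eta> h)"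
    for a \<xi> \<eta>
    unfolding lincomb_def Lam_lincomb by (simp add: sum.distrib sum_distrib_left algebra_simps)
  then show ?thesis
    unfolding bounded_op_def using lincomb_l2[OF assms] by blast
qed

lemma opnorm_lincomb_le:
  assumes "finite F" "F \<subseteq> ZN N"
  shows "opnorm N (lincomb N \<sigma> c F) \<le> (\<Sum>g\<in>F. cmod (c g))"
  using lincomb_l2[OF assms] by (intro opnorm_le) (auto intro: sum_nonneg)

lemma Lam_series_summable:
  assumes "abs_sums_le N c B" "\<xi> \<in> l2 N"
  shows "(\<lambda>g. c g * Lam N \<sigma> g \<xi> h) summable_on ZN N"
proof (rule abs_summable_summable)
  have "(\<lambda>g. cmod (c g) * l2norm N \<xi>) summable_on ZN N"
    using abs_sums_le_summable[OF assms(1)] by (rule summable_on_cmult_left)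
  moreover have "norm (c g * Lam N \<sigma> g \<xi> h) \<le> cmod (c g) * l2norm N \<xi>" if "g \<in> ZN N" for g
    using l2_norm_apply_le[of "Lam N \<sigma> g \<xi>" N h] Lam_l2[OF that assms(2)]
    by (simp add: norm_mult mult_left_mono)
  ultimately show "(\<lambda>g. norm (c g * Lam N \<sigma> g \<xi> h)) summable_on ZN N"
    by (rule Infinite_Sum.abs_summable_on_comparison_test')
qed

lemma Lam_series_l2:
  assumes c: "abs_sums_le N c B" and \<xi>: "\<xi> \<in> l2 N"
  shows "Lam_series N \<sigma> c \<xi> \<in> l2 N \<and> l2norm N (Lam_series N \<sigma> c \<xi>) \<le> B * l2norm N \<xi>"
proof (rule l2_tendsto_le)
  show "((\<lambda>F. lincomb N \<sigma> c F \<xi> h) \<longlongrightarrow> Lam_series N \<sigma> c \<xi> h) (finite_subsets_at_top (ZN N))" for h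
    using has_sum_infsum[OF Lam_series_summable[OF assms]]
    unfolding has_sum_def lincomb_def Lam_series_def by simp
  show "\<forall>\<^sub>F F in finite_subsets_at_top (ZN N).
      lincomb N \<sigma> c F \<xi> \<in> l2 N \<and> l2norm N (lincomb N \<sigma> c F \<xi>) \<le> B * l2norm N \<xi>"
  proof (rule eventually_finite_subsets_at_top_weakI)
    fix F assume F: "finite F" "F \<subseteq> ZN N"
    have "(\<Sum>g\<in>F. cmod (c g)) * l2norm N \<xi> \<le> B * l2norm N \<xi>"
      using c F by (intro mult_right_mono) (auto simp: abs_sums_le_def)
    then show "lincomb N \<sigma> c F \<xi> \<in> l2 N \<and> l2norm N (lincomb N \<sigma> c F \<xi>) \<le> B * l2norm N \<xi>"
      using lincomb_l2[OF F \<xi>, of c] by linarith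
  qed
qed (auto simp: Lam_series_def Lam_outside)

lemma Lam_series_lincomb:
  assumes c: "abs_sums_le N c B" and \<xi>: "\<xi> \<in> l2 N" "\<eta> \<in> l2 N"
  shows "Lam_series N \<sigma> c (\<lambda>h. a * \<xi> h + \<eta> h) = (\<lambda>h. a * Lam_series N \<sigma> c \<xi> h + Lam_series N \<sigma> c \<eta> h)"
proof
  fix h
  have "Lam_series N \<sigma> c (\<lambda>h. a * \<xi> h + \<eta> h) h
      = infsum (\<lambda>g. a * (c g * Lam N \<sigma> g \<xi> h) + c g * Lam N \<sigma> g \<eta> h) (ZN N)"
    unfolding Lam_series_def Lam_lincomb by (simp add: algebra_simps)
  also have "\<dots> = infsum (\<lambda>g. a * (c g * Lam N \<sigma> g \<xi> h)) (ZN N) + infsum (\<lambda>g. c g * Lam N \<sigma> g \<eta> h) (ZN N)"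
    by (intro infsum_add summable_on_cmult_right Lam_series_summable[OF c] \<xi>)
  also have "\<dots> = a * Lam_series N \<sigma> c \<xi> h + Lam_series N \<sigma> c \<eta> h"
    unfolding Lam_series_def by (subst infsum_cmult_right) (auto intro: Lam_series_summable[OF c \<xi>(1)])
  finally show "Lam_series N \<sigma> c (\<lambda>h. a * \<xi> h + \<eta> h) h = a * Lam_series N \<sigma> c \<xi> h + Lam_series N \<sigma> c \<eta> h" .
qed

lemma bounded_op_Lam_series: "abs_sums_le N c B \<Longrightarrow> bounded_op N (Lam_series N \<sigma> c)"
  unfolding bounded_op_def using Lam_series_l2 Lam_series_lincomb by blast

lemma opnorm_Lam_series_le: "abs_sums_le N c B \<Longrightarrow> opnorm N (Lam_series N \<sigma> c) \<le> B"
  by (intro opnorm_le abs_sums_le_nonneg conjunct2[OF Lam_series_l2])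

lemma Lam_series_diff:
  assumes c: "abs_sums_le N c B" and d: "abs_sums_le N d B'" and \<xi>: "\<xi> \<in> l2 N"
  shows "opdiff (Lam_series N \<sigma> c) (Lam_series N \<sigma> d) \<xi> = Lam_series N \<sigma> (\<lambda>g. c g - d g) \<xi>"
proof
  fix h
  have "Lam_series N \<sigma> (\<lambda>g. c g - d g) \<xi> h
      = infsum (\<lambda>g. c g * Lam N \<sigma> g \<xi> h + - (d g * Lam N \<sigma> g \<xi> h)) (ZN N)"
    unfolding Lam_series_def by (simp add: algebra_simps)
  also have "\<dots> = Lam_series N \<sigma> c \<xi> h + infsum (\<lambda>g. - (d g * Lam N \<sigma> g \<xi> h)) (ZN N)"
    unfolding Lam_series_def using Lam_series_summable[OF d \<xi>, of h]
    by (intro infsum_add Lam_series_summable[OF c \<xi>]) (simp add: summable_on_uminus)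
  also have "infsum (\<lambda>g. - (d g * Lam N \<sigma> g \<xi> h)) (ZN N) = - Lam_series N \<sigma> d \<xi> h"
    unfolding Lam_series_def by (rule infsum_uminus)
  finally show "opdiff (Lam_series N \<sigma> c) (Lam_series N \<sigma> d) \<xi> h = Lam_series N \<sigma> (\<lambda>g. c g - d g) \<xi> h"
    by (simp add: opdiff_apply)
qed

lemma Lam_series_minus_lincomb:
  assumes c: "abs_sums_le N c B" and F: "finite F" "F \<subseteq> ZN N" and \<xi>: "\<xi> \<in> l2 N"
  shows "opdiff (Lam_series N \<sigma> c) (lincomb N \<sigma> c F) \<xi>
    = Lam_series N \<sigma> (\<lambda>g. if g \<in> F then 0 else c g) \<xi>"
  using Lam_series_diff[OF c abs_sums_le_finite[OF F(1)] \<xi>]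
  by (simp add: opdiff_apply lincomb_eq_Lam_series[OF F] if_distrib cong: if_cong)

lemma Lam_series_partial_sums_tendsto:
  assumes c: "(\<lambda>g. cmod (c g)) summable_on ZN N"
  shows "((\<lambda>F. opnorm N (opdiff (Lam_series N \<sigma> c) (lincomb N \<sigma> c F))) \<longlongrightarrow> 0)
    (finite_subsets_at_top (ZN N))"
proof -
  let ?S = "infsum (\<lambda>g. cmod (c g)) (ZN N)"
  have "((\<lambda>F. \<Sum>g\<in>F. cmod (c g)) \<longlongrightarrow> ?S) (finite_subsets_at_top (ZN N))"
    using has_sum_infsum[OF c] by (simp add: has_sum_def)
  then have tail: "((\<lambda>F. ?S - (\<Sum>g\<in>F. cmod (c g))) \<longlongrightarrow> 0) (finite_subsets_at_top (ZN N))"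
    by (auto intro: tendsto_eq_intros)
  show ?thesis
  proof (rule tendsto_sandwich[OF _ _ tendsto_const tail])
    show "\<forall>\<^sub>F F in finite_subsets_at_top (ZN N). 0 \<le> opnorm N (opdiff (Lam_series N \<sigma> c) (lincomb N \<sigma> c F))"
      by (intro eventually_finite_subsets_at_top_weakI opnorm_nonneg bounded_op_opdiff
          bounded_op_Lam_series[OF abs_sums_le_infsum[OF c]] bounded_op_lincomb_Lam)
    show "\<forall>\<^sub>F F in finite_subsets_at_top (ZN N).
        opnorm N (opdiff (Lam_series N \<sigma> c) (lincomb N \<sigma> c F)) \<le> ?S - (\<Sum>g\<in>F. cmod (c g))"
    proof (rule eventually_finite_subsets_at_top_weakI)
      fix F assume F: "finite F" "F \<subseteq> ZN N"
      have "opnorm N (opdiff (Lam_series N \<sigma> c) (lincomb N \<sigma> c F))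
          = opnorm N (Lam_series N \<sigma> (\<lambda>g. if g \<in> F then 0 else c g))"
        by (rule opnorm_cong) (rule Lam_series_minus_lincomb[OF abs_sums_le_infsum[OF c] F])
      also have "\<dots> \<le> ?S - (\<Sum>g\<in>F. cmod (c g))"
        by (rule opnorm_Lam_series_le[OF abs_sums_le_tail[OF c F]])
      finally show "opnorm N (opdiff (Lam_series N \<sigma> c) (lincomb N \<sigma> c F)) \<le> ?S - (\<Sum>g\<in>F. cmod (c g))" .
    qed
  qed
qed

lemma fourier_lim_Lam_series:
  assumes "(\<lambda>g. cmod (\<phi> g * xhat x g)) summable_on ZN N"
  shows "fourier_lim N \<sigma> \<phi> x (Lam_series N \<sigma> (\<lambda>g. \<phi> g * xhat x g))"
  unfolding fourier_lim_def
  using bounded_op_Lam_series[OF abs_sums_le_infsum[OF assms]]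
    Lam_series_partial_sums_tendsto[OF assms] by blast

lemma fourier_lim_unique:
  assumes y1: "fourier_lim N \<sigma> \<phi> x y1" and y2: "fourier_lim N \<sigma> \<phi> x y2" and \<xi>: "\<xi> \<in> l2 N"
  shows "y1 \<xi> = y2 \<xi>"
proof -
  let ?S = "\<lambda>F. lincomb N \<sigma> (\<lambda>g. \<phi> g * xhat x g) F"
  have y: "bounded_op N y1" "bounded_op N y2" using y1 y2 by (auto simp: fourier_lim_def)
  have "((\<lambda>F. opnorm N (opdiff y1 (?S F)) + opnorm N (opdiff y2 (?S F))) \<longlongrightarrow> 0 + 0)
      (finite_subsets_at_top (ZN N))"
    using y1 y2 unfolding fourier_lim_def by (intro tendsto_add) auto
  moreover have "\<forall>\<^sub>F F in finite_subsets_at_top (ZN N).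
      opnorm N (opdiff y1 y2) \<le> opnorm N (opdiff y1 (?S F)) + opnorm N (opdiff y2 (?S F))"
  proof (rule eventually_finite_subsets_at_top_weakI)
    fix F assume F: "finite F" "F \<subseteq> ZN N"
    show "opnorm N (opdiff y1 y2) \<le> opnorm N (opdiff y1 (?S F)) + opnorm N (opdiff y2 (?S F))"
      using opnorm_opdiff_triangle[OF y(1) bounded_op_lincomb_Lam[OF F, of "\<lambda>g. \<phi> g * xhat x g"] y(2)]
      by (simp add: opnorm_opdiff_commute[of N "?S F" y2])
  qed
  ultimately have "opnorm N (opdiff y1 y2) \<le> 0 + 0"
    by (intro tendsto_le[OF _ _ tendsto_const]) auto
  then show ?thesis by (intro opnorm_opdiff_le_0_imp_eq[OF y _ \<xi>]) simp
qed

end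

section \<open>Schur multipliers\<close>

text \<open>Infinite matrices are compared through the bilinear forms of their finite sections, so
  no operator has to be attached to a matrix.\<close>

definition matrix_form :: "(grp \<Rightarrow> grp \<Rightarrow> complex) \<Rightarrow> grp set \<Rightarrow> grp set \<Rightarrow> vec \<Rightarrow> vec \<Rightarrow> complex" where
  "matrix_form X H K \<zeta> \<eta> = (\<Sum>h\<in>H. \<Sum>k\<in>K. X h k * \<zeta> k * cnj (\<eta> h))"

definition matrix_bounded :: "nat \<Rightarrow> (grp \<Rightarrow> grp \<Rightarrow> complex) \<Rightarrow> real \<Rightarrow> bool" where
  "matrix_bounded N X C \<longleftrightarrow> (\<forall>H K \<zeta> \<eta>. finite H \<longrightarrow> finite K \<longrightarrow> H \<subseteq> ZN N \<longrightarrow> K \<subseteq> ZN N \<longrightarrow>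
      cmod (matrix_form X H K \<zeta> \<eta>) \<le> C * l2norm_on K \<zeta> * l2norm_on H \<eta>)"

abbreviation schur_prod :: "(grp \<Rightarrow> grp \<Rightarrow> real) \<Rightarrow> (grp \<Rightarrow> grp \<Rightarrow> complex) \<Rightarrow> grp \<Rightarrow> grp \<Rightarrow> complex" where
  "schur_prod \<kappa> X \<equiv> (\<lambda>h k. of_real (\<kappa> h k) * X h k)"

definition schur_multiplier :: "nat \<Rightarrow> (grp \<Rightarrow> grp \<Rightarrow> real) \<Rightarrow> real \<Rightarrow> bool" where
  "schur_multiplier N \<kappa> M \<longleftrightarrow>
     (\<forall>X C. 0 \<le> C \<longrightarrow> matrix_bounded N X C \<longrightarrow> matrix_bounded N (schur_prod \<kappa> X) (M * C))"

lemma matrix_boundedD: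
  "matrix_bounded N X C \<Longrightarrow> finite H \<Longrightarrow> finite K \<Longrightarrow> H \<subseteq> ZN N \<Longrightarrow> K \<subseteq> ZN N \<Longrightarrow>
    cmod (matrix_form X H K \<zeta> \<eta>) \<le> C * l2norm_on K \<zeta> * l2norm_on H \<eta>"
  by (simp add: matrix_bounded_def)

lemma matrix_boundedI:
  "(\<And>H K \<zeta> \<eta>. finite H \<Longrightarrow> finite K \<Longrightarrow> H \<subseteq> ZN N \<Longrightarrow> K \<subseteq> ZN N \<Longrightarrow>
      cmod (matrix_form X H K \<zeta> \<eta>) \<le> C * l2norm_on K \<zeta> * l2norm_on H \<eta>) \<Longrightarrow>
    matrix_bounded N X C"
  by (simp add: matrix_bounded_def)

lemma schur_multiplierI:
  "(\<And>X C. 0 \<le> C \<Longrightarrow> matrix_bounded N X C \<Longrightarrow> matrix_bounded N (schur_prod \<kappa> X) (M * C)) \<Longrightarrow>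
    schur_multiplier N \<kappa> M"
  by (simp add: schur_multiplier_def)

lemma schur_multiplierD:
  "schur_multiplier N \<kappa> M \<Longrightarrow> 0 \<le> C \<Longrightarrow> matrix_bounded N X C \<Longrightarrow>
    matrix_bounded N (schur_prod \<kappa> X) (M * C)"
  by (simp add: schur_multiplier_def)

lemma schur_multiplier_mult:
  assumes "schur_multiplier N \<kappa>1 M1" "schur_multiplier N \<kappa>2 M2" "0 \<le> M2"
  shows "schur_multiplier N (\<lambda>h k. \<kappa>1 h k * \<kappa>2 h k) (M1 * M2)"
proof (rule schur_multiplierI)
  fix X C assume C: "0 \<le> C" and X: "matrix_bounded N X C"
  have "matrix_bounded N (schur_prod \<kappa>2 X) (M2 * C)"
    by (rule schur_multiplierD[OF assms(2) C X])
  then have "matrix_bounded N (schur_prod \<kappa>1 (schur_prod \<kappa>2 X)) (M1 * (M2 * C))"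
    using C assms(3) by (intro schur_multiplierD[OF assms(1)]) simp_all
  moreover have "schur_prod \<kappa>1 (schur_prod \<kappa>2 X) = schur_prod (\<lambda>h k. \<kappa>1 h k * \<kappa>2 h k) X"
    by (intro ext) (simp only: of_real_mult mult.assoc)
  ultimately show "matrix_bounded N (schur_prod (\<lambda>h k. \<kappa>1 h k * \<kappa>2 h k) X) (M1 * M2 * C)"
    by (simp only: mult.assoc)
qed

lemma schur_multiplier_const: "schur_multiplier N (\<lambda>h k. a) \<bar>a\<bar>"
proof (rule schur_multiplierI, rule matrix_boundedI)
  fix X C H K \<zeta> \<eta>
  assume "0 \<le> C" and X: "matrix_bounded N X C"
    and HK: "finite H" "finite K" "H \<subseteq> ZN N" "K \<subseteq> ZN N"
  have "matrix_form (schur_prod (\<lambda>h k. a) X) H K \<zeta> \<eta> = of_real a * matrix_form X H K \<zeta> \<eta>"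
    unfolding matrix_form_def by (simp add: sum_distrib_left mult.assoc)
  then have "cmod (matrix_form (schur_prod (\<lambda>h k. a) X) H K \<zeta> \<eta>) = \<bar>a\<bar> * cmod (matrix_form X H K \<zeta> \<eta>)"
    by (simp add: norm_mult)
  also have "\<dots> \<le> \<bar>a\<bar> * (C * l2norm_on K \<zeta> * l2norm_on H \<eta>)"
    by (intro mult_left_mono matrix_boundedD[OF X HK]) simp
  finally show "cmod (matrix_form (schur_prod (\<lambda>h k. a) X) H K \<zeta> \<eta>) \<le> \<bar>a\<bar> * C * l2norm_on K \<zeta> * l2norm_on H \<eta>"
    by (simp add: mult.assoc)
qed

lemma schur_multiplier_scale:
  "schur_multiplier N \<kappa> M \<Longrightarrow> 0 \<le> a \<Longrightarrow> 0 \<le> M \<Longrightarrow> schur_multiplier N (\<lambda>h k. a * \<kappa> h k) (a * M)"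
  using schur_multiplier_mult[OF schur_multiplier_const[of N a]] by simp

lemma schur_multiplier_power:
  assumes "schur_multiplier N \<kappa> M" "0 \<le> M"
  shows "schur_multiplier N (\<lambda>h k. (\<kappa> h k) ^ n) (M ^ n)"
proof (induction n)
  case 0
  then show ?case using schur_multiplier_const[of N 1] by simp
next
  case (Suc n)
  then show ?case
    using schur_multiplier_mult[OF assms(1) Suc zero_le_power[OF assms(2)]] by (simp add: mult_ac)
qed

lemma schur_multiplier_prod:
  assumes "finite I" "\<And>i. i \<in> I \<Longrightarrow> schur_multiplier N (\<kappa> i) 1"
  shows "schur_multiplier N (\<lambda>h k. \<Prod>i\<in>I. \<kappa> i h k) 1"
  using assms
proof (induction I rule: finite_induct)
  case empty
  then show ?case using schur_multiplier_const[of N 1] by simp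
next
  case (insert j I)
  then show ?case using schur_multiplier_mult[of N "\<kappa> j" 1 _ 1] by simp
qed

lemma matrix_form_sums:
  assumes "\<And>h k. (\<lambda>n. f n h k) sums f' h k"
  shows "(\<lambda>n. matrix_form (schur_prod (f n) X) H K \<zeta> \<eta>) sums matrix_form (schur_prod f' X) H K \<zeta> \<eta>"
  unfolding matrix_form_def by (intro sums_sum sums_mult2 sums_of_real assms)

lemma schur_multiplier_suminf:
  assumes \<kappa>: "\<And>h k. (\<lambda>n. \<kappa> n h k) sums \<kappa>' h k"
    and schur: "\<And>n. schur_multiplier N (\<kappa> n) (M n)" and M: "\<And>n. 0 \<le> M n" "M sums M'"
  shows "schur_multiplier N \<kappa>' M'"
proof (rule schur_multiplierI, rule matrix_boundedI)
  fix X C H K \<zeta> \<eta>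
  assume C: "0 \<le> C" and X: "matrix_bounded N X C"
    and HK: "finite H" "finite K" "H \<subseteq> ZN N" "K \<subseteq> ZN N"
  define s where "s n = matrix_form (schur_prod (\<kappa> n) X) H K \<zeta> \<eta>" for n
  define W where "W = C * l2norm_on K \<zeta> * l2norm_on H \<eta>"
  have bound: "norm (s n) \<le> M n * W" for n
    using matrix_boundedD[OF schur_multiplierD[OF schur C X] HK] by (simp add: s_def W_def mult.assoc)
  have MW: "(\<lambda>n. M n * W) sums (M' * W)" by (rule sums_mult2[OF M(2)])
  have summable: "summable (\<lambda>n. norm (s n))"
    by (rule summable_comparison_test'[OF sums_summable[OF MW]]) (use bound in simp)
  have "cmod (matrix_form (schur_prod \<kappa>' X) H K \<zeta> \<eta>) = norm (suminf s)"
    using sums_unique[OF matrix_form_sums[of \<kappa> \<kappa>' X H K \<zeta> \<eta>, OF \<kappa>]] by (simp add: s_def[abs_def])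
  also have "\<dots> \<le> (\<Sum>n. norm (s n))" by (rule summable_norm[OF summable])
  also have "\<dots> \<le> (\<Sum>n. M n * W)" by (rule suminf_le[OF bound summable sums_summable[OF MW]])
  also have "\<dots> = M' * W" using sums_unique[OF MW] by simp
  finally show "cmod (matrix_form (schur_prod \<kappa>' X) H K \<zeta> \<eta>) \<le> M' * C * l2norm_on K \<zeta> * l2norm_on H \<eta>"
    by (simp add: W_def mult.assoc)
qed

lemma schur_multiplier_limit:
  assumes \<kappa>: "\<And>h k. ((\<lambda>j. \<kappa> j h k) \<longlongrightarrow> \<kappa>' h k) F" and "F \<noteq> bot"
    and schur: "eventually (\<lambda>j. schur_multiplier N (\<kappa> j) M) F"
  shows "schur_multiplier N \<kappa>' M"
proof (rule schur_multiplierI, rule matrix_boundedI)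
  fix X C H K \<zeta> \<eta>
  assume C: "0 \<le> C" and X: "matrix_bounded N X C"
    and HK: "finite H" "finite K" "H \<subseteq> ZN N" "K \<subseteq> ZN N"
  have "((\<lambda>j. cmod (matrix_form (schur_prod (\<kappa> j) X) H K \<zeta> \<eta>)) \<longlongrightarrow>
      cmod (matrix_form (schur_prod \<kappa>' X) H K \<zeta> \<eta>)) F"
    unfolding matrix_form_def by (intro tendsto_intros \<kappa>)
  moreover have "eventually (\<lambda>j. cmod (matrix_form (schur_prod (\<kappa> j) X) H K \<zeta> \<eta>)
      \<le> M * C * l2norm_on K \<zeta> * l2norm_on H \<eta>) F"
    using schur by eventually_elim (use matrix_boundedD[OF schur_multiplierD[OF _ C X] HK] in blast)
  ultimately show "cmod (matrix_form (schur_prod \<kappa>' X) H K \<zeta> \<eta>) \<le> M * C * l2norm_on K \<zeta> * l2norm_on H \<eta>"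
    using \<open>F \<noteq> bot\<close> by (simp add: tendsto_upperbound)
qed

lemma L2_set_weighted_le:
  assumes a: "\<And>k. (\<lambda>n. (a n k)\<^sup>2) sums 1" and K: "finite K"
  shows "L2_set (\<lambda>n. l2norm_on K (\<lambda>k. of_real (a n k) * \<zeta> k)) {..<m} \<le> l2norm_on K \<zeta>"
proof -
  have partial: "(\<Sum>n<m. (a n k)\<^sup>2) \<le> 1" for k
    using sum_le_suminf[OF sums_summable[OF a], of "{..<m}"] sums_unique[OF a] by simp
  have "(\<Sum>n<m. (l2norm_on K (\<lambda>k. of_real (a n k) * \<zeta> k))\<^sup>2)
      = (\<Sum>n<m. \<Sum>k\<in>K. (a n k)\<^sup>2 * (cmod (\<zeta> k))\<^sup>2)"
    unfolding L2_set_def using K by (simp add: sum_nonneg norm_mult power_mult_distrib)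
  also have "\<dots> = (\<Sum>k\<in>K. (\<Sum>n<m. (a n k)\<^sup>2) * (cmod (\<zeta> k))\<^sup>2)"
    by (subst sum.swap) (simp add: sum_distrib_right)
  also have "\<dots> \<le> (\<Sum>k\<in>K. (cmod (\<zeta> k))\<^sup>2)"
    using partial by (intro sum_mono mult_left_le_one_le) (auto intro: sum_nonneg)
  finally show ?thesis unfolding L2_set_def by (intro real_sqrt_le_mono)
qed

text \<open>Split the matrix form into the forms of the rescaled vectors \<open>a\<^sub>n \<zeta>\<close>, \<open>a\<^sub>n \<eta>\<close> and apply
  Cauchy--Schwarz in \<open>n\<close>.\<close>
lemma schur_multiplier_gram:
  assumes \<kappa>: "\<And>h k. (\<lambda>n. a n h * a n k) sums \<kappa> h k"
    and unit: "\<And>h. (\<lambda>n. (a n h)\<^sup>2) sums 1"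
  shows "schur_multiplier N \<kappa> 1"
proof (rule schur_multiplierI, rule matrix_boundedI)
  fix X C H K \<zeta> \<eta>
  assume C: "0 \<le> C" and X: "matrix_bounded N X C"
    and HK: "finite H" "finite K" "H \<subseteq> ZN N" "K \<subseteq> ZN N"
  define A where "A n = l2norm_on K (\<lambda>k. of_real (a n k) * \<zeta> k)" for n
  define B where "B n = l2norm_on H (\<lambda>h. of_real (a n h) * \<eta> h)" for n
  define s where "s n = matrix_form X H K (\<lambda>k. of_real (a n k) * \<zeta> k) (\<lambda>h. of_real (a n h) * \<eta> h)" for n
  have "s = (\<lambda>n. matrix_form (schur_prod (\<lambda>h k. a n h * a n k) X) H K \<zeta> \<eta>)"
    unfolding s_def matrix_form_def by (intro ext sum.cong refl) (simp add: mult_ac)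
  then have s: "s sums matrix_form (schur_prod \<kappa> X) H K \<zeta> \<eta>"
    using matrix_form_sums[of "\<lambda>n h k. a n h * a n k" \<kappa> X H K \<zeta> \<eta>, OF \<kappa>] by simp
  have partial: "norm (\<Sum>n<m. s n) \<le> 1 * C * l2norm_on K \<zeta> * l2norm_on H \<eta>" for m
  proof -
    have "norm (\<Sum>n<m. s n) \<le> (\<Sum>n<m. C * (\<bar>A n\<bar> * \<bar>B n\<bar>))"
      using matrix_boundedD[OF X HK] by (intro order_trans[OF norm_sum] sum_mono)
        (simp add: s_def A_def B_def mult.assoc)
    also have "\<dots> \<le> C * (L2_set A {..<m} * L2_set B {..<m})"
      unfolding sum_distrib_left[symmetric] by (intro mult_left_mono L2_set_mult_ineq C)
    also have "\<dots> \<le> C * (l2norm_on K \<zeta> * l2norm_on H \<eta>)"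
      unfolding A_def B_def using HK
      by (intro mult_left_mono mult_mono L2_set_weighted_le unit C) auto
    finally show ?thesis by (simp add: mult.assoc)
  qed
  have "(\<lambda>m. norm (\<Sum>n<m. s n)) \<longlonglongrightarrow> norm (matrix_form (schur_prod \<kappa> X) H K \<zeta> \<eta>)"
    using s unfolding sums_def by (intro tendsto_intros)
  then show "cmod (matrix_form (schur_prod \<kappa> X) H K \<zeta> \<eta>) \<le> 1 * C * l2norm_on K \<zeta> * l2norm_on H \<eta>"
    by (rule LIMSEQ_le_const2) (use partial in auto)
qed

section \<open>The kernels \<open>r\<^bsup>L(h - k)\<^esup>\<close>\<close>

definition sqdist_on :: "nat set \<Rightarrow> grp \<Rightarrow> grp \<Rightarrow> real" where
  "sqdist_on I h k = (\<Sum>i\<in>I. (real_of_int (h i - k i))\<^sup>2)"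

definition gauss :: "nat set \<Rightarrow> real \<Rightarrow> grp \<Rightarrow> grp \<Rightarrow> real" where
  "gauss I u h k = exp (- u * sqdist_on I h k)"

lemma sqdist_on_nonneg: "0 \<le> sqdist_on I h k"
  by (simp add: sqdist_on_def sum_nonneg)

lemma gauss_pos: "0 < gauss I u h k"
  by (simp add: gauss_def)

lemma gauss_le_1: "0 \<le> u \<Longrightarrow> gauss I u h k \<le> 1"
  using sqdist_on_nonneg[of I h k] by (simp add: gauss_def)

lemma gauss_power: "gauss I u h k ^ n = gauss I (real n * u) h k"
  unfolding gauss_def by (simp add: exp_of_nat_mult[symmetric] mult_ac)

text \<open>\<open>exp(-u (x - y)\<^sup>2) = e\<^bsup>-u x\<^sup>2\<^esup> e\<^bsup>-u y\<^sup>2\<^esup> exp(2uxy)\<close>, and expanding the last factor exhibits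
  it as a Gram kernel.\<close>
lemma schur_multiplier_gauss_coordinate:
  assumes u: "0 \<le> u"
  shows "schur_multiplier N (gauss {i} u) 1"
proof (rule schur_multiplier_gram)
  define a where "a n h = exp (- u * (real_of_int (h i))\<^sup>2) * sqrt ((2 * u) ^ n / fact n) * (real_of_int (h i)) ^ n"
    for n h
  have sq: "(sqrt ((2 * u) ^ n / fact n))\<^sup>2 = (2 * u) ^ n / fact n" for n
    using u by simp
  have a_mult: "a n h * a n k = exp (- u * ((real_of_int (h i))\<^sup>2 + (real_of_int (k i))\<^sup>2)) *
      ((2 * u * real_of_int (h i) * real_of_int (k i)) ^ n /\<^sub>R fact n)" for n h k
  proof -
    have "a n h * a n k = exp (- u * (real_of_int (h i))\<^sup>2) * exp (- u * (real_of_int (k i))\<^sup>2) *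
        (sqrt ((2 * u) ^ n / fact n))\<^sup>2 * (real_of_int (h i) * real_of_int (k i)) ^ n"
      unfolding a_def by (simp add: power2_eq_square power_mult_distrib mult_ac)
    then show ?thesis
      unfolding sq by (simp add: exp_add[symmetric] power_mult_distrib algebra_simps divide_inverse)
  qed
  show "(\<lambda>n. a n h * a n k) sums gauss {i} u h k" for h k
  proof -
    have "(\<lambda>n. a n h * a n k) sums (exp (- u * ((real_of_int (h i))\<^sup>2 + (real_of_int (k i))\<^sup>2)) *
        exp (2 * u * real_of_int (h i) * real_of_int (k i)))"
      unfolding a_mult by (intro sums_mult exp_converges)
    then show ?thesis
      by (simp add: gauss_def sqdist_on_def exp_add[symmetric] power2_eq_square algebra_simps)
  qed
  show "(\<lambda>n. (a n h)\<^sup>2) sums 1" for h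
  proof -
    have "(\<lambda>n. (a n h)\<^sup>2) sums (exp (- u * ((real_of_int (h i))\<^sup>2 + (real_of_int (h i))\<^sup>2)) *
        exp (2 * u * real_of_int (h i) * real_of_int (h i)))"
      unfolding power2_eq_square[of "a _ h"] a_mult by (intro sums_mult exp_converges)
    then show ?thesis
      by (simp add: exp_add[symmetric] power2_eq_square algebra_simps)
  qed
qed

lemma schur_multiplier_gauss:
  assumes "finite I" "0 \<le> u"
  shows "schur_multiplier N (gauss I u) 1"
proof -
  have "gauss I u = (\<lambda>h k. \<Prod>i\<in>I. gauss {i} u h k)"
    unfolding gauss_def sqdist_on_def using assms(1)
    by (simp add: fun_eq_iff exp_sum[symmetric] sum_distrib_left)
  then show ?thesis
    using schur_multiplier_prod[OF assms(1), of N "\<lambda>i. gauss {i} u"] schur_multiplier_gauss_coordinate[OF assms(2)]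
    by simp
qed

text \<open>The Taylor coefficients of \<open>1 - \<surd>(1 - z)\<close>.\<close>
definition sqrt_coeff :: "nat \<Rightarrow> real" where
  "sqrt_coeff n = (if n = 0 then 1 else 0) - ((1/2) gchoose n) * (-1) ^ n"

lemma sqrt_coeff_sums:
  assumes "0 \<le> z" "z < 1"
  shows "(\<lambda>n. sqrt_coeff n * z ^ n) sums (1 - sqrt (1 - z))"
proof -
  have "(\<lambda>n. ((1/2::real) gchoose n) * (-z) ^ n) sums sqrt (1 - z)"
    using gen_binomial_real[of "-z" "1/2"] assms by (simp add: powr_half_sqrt)
  from sums_diff[OF sums_single[of 0 "\<lambda>_. 1::real"] this]
  show ?thesis
    by (rule sums_cong[THEN iffD1, rotated])
      (auto simp: sqrt_coeff_def algebra_simps power_minus[of z])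
qed

lemma sqrt_coeff_nonneg: "0 \<le> sqrt_coeff n"
proof (cases n)
  case (Suc k)
  have sign: "0 \<le> (\<Prod>i\<in>{0..k}. (1/2::real) - of_nat i) * (-1) ^ k"
  proof (induction k)
    case (Suc k)
    have "(\<Prod>i\<in>{0..Suc k}. (1/2::real) - of_nat i) * (-1) ^ Suc k
        = ((\<Prod>i\<in>{0..k}. (1/2::real) - of_nat i) * (-1) ^ k) * (of_nat (Suc k) - 1/2)"
      by (simp add: prod.atLeast0_atMost_Suc algebra_simps)
    then show ?case using Suc.IH by simp
  qed simp
  have "sqrt_coeff n = ((\<Prod>i\<in>{0..k}. (1/2::real) - of_nat i) * (-1) ^ k) / fact (Suc k)"
    unfolding sqrt_coeff_def Suc gbinomial_Suc by simp
  then show ?thesis using sign by simp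
qed (simp add: sqrt_coeff_def)

text \<open>\<open>1 - \<surd>(1 - q G)\<close> is a power series in the Gaussian kernel \<open>G\<close> with nonnegative
  coefficients; with \<open>q = e\<^bsup>-u\<^sup>2\<^esup>\<close> it is the kernel from which \<open>exp(-t \<bar>h - k\<bar>\<^sub>2)\<close> is obtained
  in the limit \<open>u \<rightarrow> 0\<close>.\<close>
definition subord_kernel :: "nat set \<Rightarrow> real \<Rightarrow> real \<Rightarrow> grp \<Rightarrow> grp \<Rightarrow> real" where
  "subord_kernel I q u h k = 1 - sqrt (1 - q * gauss I u h k)"

lemma schur_multiplier_subord_kernel:
  assumes I: "finite I" and q: "0 \<le> q" "q < 1" and u: "0 \<le> u"
  shows "schur_multiplier N (subord_kernel I q u) (1 - sqrt (1 - q))"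
proof (rule schur_multiplier_suminf)
  show "(\<lambda>n. sqrt_coeff n * q ^ n * gauss I (real n * u) h k) sums subord_kernel I q u h k" for h k
  proof -
    have "q * gauss I u h k \<le> q" using q gauss_le_1[OF u, of I h k] by (simp add: mult_left_le)
    then have "(\<lambda>n. sqrt_coeff n * (q * gauss I u h k) ^ n) sums subord_kernel I q u h k"
      unfolding subord_kernel_def using q gauss_pos[of I u h k] by (intro sqrt_coeff_sums) auto
    then show ?thesis by (simp add: power_mult_distrib gauss_power mult_ac)
  qed
  show "schur_multiplier N (\<lambda>h k. sqrt_coeff n * q ^ n * gauss I (real n * u) h k) (sqrt_coeff n * q ^ n)" for n
    using schur_multiplier_scale[OF schur_multiplier_gauss[OF I], of "real n * u" "sqrt_coeff n * q ^ n"]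
      q u sqrt_coeff_nonneg[of n] by simp
  show "0 \<le> sqrt_coeff n * q ^ n" for n using sqrt_coeff_nonneg[of n] q by simp
  show "(\<lambda>n. sqrt_coeff n * q ^ n) sums (1 - sqrt (1 - q))" by (rule sqrt_coeff_sums[OF q])
qed

lemma schur_multiplier_exp:
  assumes "schur_multiplier N \<kappa> M" "0 \<le> M" "0 \<le> \<tau>"
  shows "schur_multiplier N (\<lambda>h k. exp (\<tau> * \<kappa> h k)) (exp (\<tau> * M))"
proof (rule schur_multiplier_suminf)
  show "(\<lambda>n. (\<tau> ^ n / fact n) * (\<kappa> h k) ^ n) sums exp (\<tau> * \<kappa> h k)" for h k
    using exp_converges[of "\<tau> * \<kappa> h k"] by (simp add: power_mult_distrib divide_inverse mult_ac)
  show "schur_multiplier N (\<lambda>h k. (\<tau> ^ n / fact n) * (\<kappa> h k) ^ n) ((\<tau> ^ n / fact n) * M ^ n)" for n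
    using assms by (intro schur_multiplier_scale schur_multiplier_power) auto
  show "0 \<le> (\<tau> ^ n / fact n) * M ^ n" for n using assms by simp
  show "(\<lambda>n. (\<tau> ^ n / fact n) * M ^ n) sums exp (\<tau> * M)"
    using exp_converges[of "\<tau> * M"] by (simp add: power_mult_distrib divide_inverse mult_ac)
qed

definition exp_dist_kernel :: "nat set \<Rightarrow> real \<Rightarrow> grp \<Rightarrow> grp \<Rightarrow> real" where
  "exp_dist_kernel I t h k = exp (- t * sqrt (sqdist_on I h k))"

lemma sqrt_exp_difference_tendsto:
  assumes "0 \<le> (D::real)"
  shows "((\<lambda>u. (sqrt (1 - exp (- (u * u))) - sqrt (1 - exp (- (u * u) - D * u))) / sqrt u)
    \<longlongrightarrow> - sqrt D) (at_right 0)"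
proof (cases "D = 0")
  case True
  then show ?thesis by simp
next
  case False
  with assms have "D > 0" by simp
  then have "((\<lambda>u. (sqrt (1 - exp (- (u * u))) - sqrt (1 - exp (- (u * u) - D * u))) / sqrt u)
      \<longlongrightarrow> - (D powr (1/2))) (at_right 0)"
    by real_asymp
  then show ?thesis using \<open>D > 0\<close> by (simp add: powr_half_sqrt)
qed

lemma exp_subord_kernel_tendsto:
  "((\<lambda>u. exp (t / sqrt u * (subord_kernel I (exp (- (u * u))) u h k - (1 - sqrt (1 - exp (- (u * u)))))))
    \<longlongrightarrow> exp_dist_kernel I t h k) (at_right 0)"
proof -
  define D where "D = sqdist_on I h k"
  have diff: "subord_kernel I (exp (- (u * u))) u h k - (1 - sqrt (1 - exp (- (u * u))))
      = sqrt (1 - exp (- (u * u))) - sqrt (1 - exp (- (u * u) - D * u))" for u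
    by (simp add: subord_kernel_def gauss_def D_def exp_add[symmetric] algebra_simps)
  have "((\<lambda>u. exp (t * ((sqrt (1 - exp (- (u * u))) - sqrt (1 - exp (- (u * u) - D * u))) / sqrt u)))
      \<longlongrightarrow> exp (t * - sqrt D)) (at_right 0)"
    by (intro tendsto_intros sqrt_exp_difference_tendsto) (simp add: D_def sqdist_on_nonneg)
  then show ?thesis
    unfolding diff by (simp add: exp_dist_kernel_def D_def)
qed

lemma schur_multiplier_exp_dist_kernel:
  assumes I: "finite I" and t: "0 \<le> t"
  shows "schur_multiplier N (exp_dist_kernel I t) 1"
proof (rule schur_multiplier_limit[OF exp_subord_kernel_tendsto])
  have "schur_multiplier N (\<lambda>h k. exp (t / sqrt u *
      (subord_kernel I (exp (- (u * u))) u h k - (1 - sqrt (1 - exp (- (u * u))))))) 1"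
    if u: "0 < u" for u
  proof -
    let ?M = "1 - sqrt (1 - exp (- (u * u)))" and ?\<tau> = "t / sqrt u"
    have "schur_multiplier N (\<lambda>h k. exp (?\<tau> * subord_kernel I (exp (- (u * u))) u h k)) (exp (?\<tau> * ?M))"
      using u t by (intro schur_multiplier_exp schur_multiplier_subord_kernel I) auto
    from schur_multiplier_scale[OF this, of "exp (- ?\<tau> * ?M)"]
    show ?thesis by (simp add: exp_add[symmetric] algebra_simps)
  qed
  then show "\<forall>\<^sub>F u in at_right 0. schur_multiplier N (\<lambda>h k. exp (t / sqrt u *
      (subord_kernel I (exp (- (u * u))) u h k - (1 - sqrt (1 - exp (- (u * u))))))) 1"
    using eventually_at_right_less[of 0] by (auto elim: eventually_mono)
qed simp

lemma powr_eq_exp_neg_ln: "0 < (r::real) \<Longrightarrow> r powr x = exp (- (- ln r) * x)"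
  by (simp add: powr_def mult.commute)

lemma schur_multiplier_powr_L:
  assumes L: "L = L1 N \<or> L = L2 N \<or> L = L2sq N" and r: "0 < r" "r < 1"
  shows "schur_multiplier N (\<lambda>h k. r powr L (gadd (gneg k) h)) 1"
proof -
  define t where "t = - ln r"
  have t: "0 \<le> t" using r by (simp add: t_def)
  have sqdist: "(\<Sum>i<N. (real_of_int (gadd (gneg k) h i))\<^sup>2) = sqdist_on {..<N} h k" for h k
    by (simp add: sqdist_on_def gadd_apply gneg_apply)
  consider "L = L2sq N" | "L = L2 N" | "L = L1 N" using L by blast
  then show ?thesis
  proof cases
    case 1
    then have "(\<lambda>h k. r powr L (gadd (gneg k) h)) = gauss {..<N} t"
      using r by (simp add: fun_eq_iff L2sq_def sqdist gauss_def powr_eq_exp_neg_ln t_def)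
    then show ?thesis using schur_multiplier_gauss[OF _ t] by simp
  next
    case 2
    then have "(\<lambda>h k. r powr L (gadd (gneg k) h)) = exp_dist_kernel {..<N} t"
      using r by (simp add: fun_eq_iff L2_def sqdist exp_dist_kernel_def powr_eq_exp_neg_ln t_def)
    then show ?thesis using schur_multiplier_exp_dist_kernel[OF _ t] by simp
  next
    case 3
    then have "(\<lambda>h k. r powr L (gadd (gneg k) h)) = (\<lambda>h k. \<Prod>i<N. exp_dist_kernel {i} t h k)"
      using r by (simp add: fun_eq_iff L1_def exp_dist_kernel_def sqdist_on_def powr_eq_exp_neg_ln
          t_def exp_sum[symmetric] sum_distrib_left gadd_apply gneg_apply)
    then show ?thesis
      using schur_multiplier_prod[of "{..<N}" N "\<lambda>i. exp_dist_kernel {i} t"]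
        schur_multiplier_exp_dist_kernel[OF _ t] by simp
  qed
qed

section \<open>Matrices of elements of \<open>C\<^sup>*\<^sub>r(\<int>\<^sup>N, \<sigma>)\<close>\<close>

definition delta :: "grp \<Rightarrow> vec" where
  "delta k = (\<lambda>g. if g = k then 1 else 0)"

lemma delta_e_eq: "delta_e = delta gzero"
  by (simp add: delta_e_def delta_def)

lemma delta_l2: "k \<in> ZN N \<Longrightarrow> delta k \<in> l2 N \<and> l2norm N (delta k) \<le> 1"
  using trunc_finite_l2[of "{k}" N "\<lambda>_. 1"] by (simp add: L2_set_def trunc_def delta_def)

lemma bounded_op_trunc:
  assumes T: "bounded_op N T" and K: "finite K" "K \<subseteq> ZN N"
  shows "T (trunc K \<zeta>) h = (\<Sum>k\<in>K. \<zeta> k * T (delta k) h)"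
  using K
proof (induction K rule: finite_induct)
  case empty
  have "trunc {} \<zeta> = (\<lambda>_. 0)" by (simp add: trunc_def)
  then show ?case using bounded_op_zero[OF T] by simp
next
  case (insert k K)
  have "trunc (insert k K) \<zeta> = (\<lambda>g. \<zeta> k * delta k g + trunc K \<zeta> g)"
    using insert by (auto simp: trunc_def delta_def)
  then have "T (trunc (insert k K) \<zeta>) = (\<lambda>g. \<zeta> k * T (delta k) g + T (trunc K \<zeta>) g)"
    using insert delta_l2 trunc_finite_l2 by (simp add: bounded_op_lincomb[OF T])
  then show ?case using insert by simp
qed

lemma matrix_bounded_opnorm:
  assumes T: "bounded_op N T"
  shows "matrix_bounded N (\<lambda>h k. T (delta k) h) (opnorm N T)"
proof (rule matrix_boundedI)
  fix H K \<zeta> \<eta> assume HK: "finite H" "finite K" "H \<subseteq> ZN N" "K \<subseteq> ZN N"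
  let ?x = "trunc K \<zeta>"
  have x: "?x \<in> l2 N" "l2norm N ?x \<le> l2norm_on K \<zeta>"
    using trunc_finite_l2[OF HK(2,4)] by auto
  have "matrix_form (\<lambda>h k. T (delta k) h) H K \<zeta> \<eta> = (\<Sum>h\<in>H. T ?x h * cnj (\<eta> h))"
    unfolding matrix_form_def bounded_op_trunc[OF T HK(2,4)]
    by (simp add: sum_distrib_left sum_distrib_right mult_ac)
  also have "cmod \<dots> \<le> (\<Sum>h\<in>H. \<bar>cmod (T ?x h)\<bar> * \<bar>cmod (\<eta> h)\<bar>)"
    by (rule order_trans[OF norm_sum]) (simp add: norm_mult)
  also have "\<dots> \<le> l2norm_on H (T ?x) * l2norm_on H \<eta>"
    by (rule L2_set_mult_ineq)
  also have "\<dots> \<le> (opnorm N T * l2norm_on K \<zeta>) * l2norm_on H \<eta>"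
  proof (rule mult_right_mono)
    have "l2norm_on H (T ?x) \<le> l2norm N (T ?x)"
      by (rule l2norm_on_le_l2norm[OF bounded_op_l2[OF T x(1)] HK(1)])
    also have "\<dots> \<le> opnorm N T * l2norm N ?x"
      by (rule opnorm_bound[OF T x(1)])
    also have "\<dots> \<le> opnorm N T * l2norm_on K \<zeta>"
      by (intro mult_left_mono x(2) opnorm_nonneg T)
    finally show "l2norm_on H (T ?x) \<le> opnorm N T * l2norm_on K \<zeta>" .
  qed simp
  finally show "cmod (matrix_form (\<lambda>h k. T (delta k) h) H K \<zeta> \<eta>) \<le> opnorm N T * l2norm_on K \<zeta> * l2norm_on H \<eta>" .
qed

definition twisted_toeplitz :: "nat \<Rightarrow> (grp \<Rightarrow> grp \<Rightarrow> complex) \<Rightarrow> op \<Rightarrow> bool" where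
  "twisted_toeplitz N \<sigma> T \<longleftrightarrow> (\<forall>h\<in>ZN N. \<forall>k\<in>ZN N.
     T (delta k) h = T delta_e (gadd (gneg k) h) * \<sigma> (gadd (gneg k) h) k)"

lemma twisted_toeplitz_opdiff:
  "twisted_toeplitz N \<sigma> S \<Longrightarrow> twisted_toeplitz N \<sigma> T \<Longrightarrow> twisted_toeplitz N \<sigma> (opdiff S T)"
  by (simp add: twisted_toeplitz_def opdiff_apply algebra_simps)

lemma norm_opdiff_delta_le:
  assumes S: "bounded_op N S" and T: "bounded_op N T" and k: "k \<in> ZN N"
  shows "cmod (S (delta k) h - T (delta k) h) \<le> opnorm N (opdiff S T)"
proof -
  have d: "delta k \<in> l2 N" "l2norm N (delta k) \<le> 1" using delta_l2[OF k] by auto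
  have ST: "bounded_op N (opdiff S T)" by (rule bounded_op_opdiff[OF S T])
  have "cmod (S (delta k) h - T (delta k) h) = cmod (opdiff S T (delta k) h)"
    by (simp add: opdiff_apply)
  also have "\<dots> \<le> l2norm N (opdiff S T (delta k))"
    by (rule l2_norm_apply_le[OF bounded_op_l2[OF ST d(1)]])
  also have "\<dots> \<le> opnorm N (opdiff S T) * l2norm N (delta k)"
    by (rule opnorm_bound[OF ST d(1)])
  also have "\<dots> \<le> opnorm N (opdiff S T)"
    using d(2) opnorm_nonneg[OF ST] by (simp add: mult_left_le)
  finally show ?thesis .
qed

lemma Cstar_rD:
  assumes "x \<in> Cstar_r N \<sigma>"
  shows "bounded_op N x"
    and "e > 0 \<Longrightarrow> \<exists>F c. finite F \<and> F \<subseteq> ZN N \<and> opnorm N (opdiff x (lincomb N \<sigma> c F)) < e"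
  using assms unfolding Cstar_r_def by auto

context
  fixes N :: nat and \<sigma> :: "grp \<Rightarrow> grp \<Rightarrow> complex"
  assumes cocycle: "normalized_cocycle N \<sigma>"
begin

lemma twisted_toeplitz_Lam:
  assumes g: "g \<in> ZN N"
  shows "twisted_toeplitz N \<sigma> (Lam N \<sigma> g)"
  unfolding twisted_toeplitz_def
proof (intro ballI)
  fix h k assume h: "h \<in> ZN N" and k: "k \<in> ZN N"
  show "Lam N \<sigma> g (delta k) h = Lam N \<sigma> g delta_e (gadd (gneg k) h) * \<sigma> (gadd (gneg k) h) k"
  proof (cases "gadd (gneg g) h = k")
    case True
    then have "g = gadd (gneg k) h" by (simp add: gdiff_eq_iff')
    then show ?thesis using True h k g normalized_cocycle_gzero[OF cocycle g]
      by (simp add: Lam_def delta_def delta_e_def gdiff_gdiff_eq_gzero_iff)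
  next
    case False
    then show ?thesis using h k by (simp add: Lam_def delta_def delta_e_def gdiff_gdiff_eq_gzero_iff)
  qed
qed

lemma twisted_toeplitz_lincomb:
  assumes "finite F" "F \<subseteq> ZN N"
  shows "twisted_toeplitz N \<sigma> (lincomb N \<sigma> c F)"
  unfolding twisted_toeplitz_def
proof (intro ballI)
  fix h k assume h: "h \<in> ZN N" and k: "k \<in> ZN N"
  have "lincomb N \<sigma> c F (delta k) h
      = (\<Sum>g\<in>F. c g * (Lam N \<sigma> g delta_e (gadd (gneg k) h) * \<sigma> (gadd (gneg k) h) k))"
    unfolding lincomb_def
    using twisted_toeplitz_Lam assms(2) h k by (intro sum.cong) (auto simp: twisted_toeplitz_def)
  then show "lincomb N \<sigma> c F (delta k) h = lincomb N \<sigma> c F delta_e (gadd (gneg k) h) * \<sigma> (gadd (gneg k) h) k"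
    by (simp add: lincomb_def sum_distrib_left sum_distrib_right mult_ac)
qed

text \<open>The matrix entries are continuous in operator norm and \<open>\<bar>\<sigma>\<bar> = 1\<close>, so the identity
  passes from the \<open>lincomb\<close>s to their closure.\<close>
lemma twisted_toeplitz_Cstar_r:
  assumes x: "x \<in> Cstar_r N \<sigma>"
  shows "twisted_toeplitz N \<sigma> x"
  unfolding twisted_toeplitz_def
proof (intro ballI)
  fix h k assume h: "h \<in> ZN N" and k: "k \<in> ZN N"
  define d where "d = gadd (gneg k) h"
  have d: "d \<in> ZN N" using h k by (simp add: d_def)
  have bx: "bounded_op N x" by (rule Cstar_rD(1)[OF x])
  let ?z = "x (delta k) h - x delta_e d * \<sigma> d k"
  have bound: "cmod ?z \<le> 2 * e" if e: "e > 0" for e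
  proof -
    obtain F c where F: "finite F" "F \<subseteq> ZN N" and close: "opnorm N (opdiff x (lincomb N \<sigma> c F)) < e"
      using Cstar_rD(2)[OF x e] by blast
    let ?a = "lincomb N \<sigma> c F"
    have ba: "bounded_op N ?a" by (rule bounded_op_lincomb_Lam[OF cocycle F])
    have "?a (delta k) h = ?a delta_e d * \<sigma> d k"
      using twisted_toeplitz_lincomb[OF F] h k by (simp add: twisted_toeplitz_def d_def)
    then have "cmod ?z = cmod ((x (delta k) h - ?a (delta k) h) - (x delta_e d - ?a delta_e d) * \<sigma> d k)"
      by (simp add: algebra_simps)
    also have "\<dots> \<le> cmod (x (delta k) h - ?a (delta k) h) + cmod (x delta_e d - ?a delta_e d)"
      using norm_triangle_ineq4[of "x (delta k) h - ?a (delta k) h" "(x delta_e d - ?a delta_e d) * \<sigma> d k"]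
        normalized_cocycle_norm[OF cocycle d k] by (simp add: norm_mult)
    also have "\<dots> \<le> 2 * opnorm N (opdiff x ?a)"
      using norm_opdiff_delta_le[OF bx ba k, of h] norm_opdiff_delta_le[OF bx ba gzero_ZN, of d]
      by (simp add: delta_e_eq)
    finally show ?thesis using close by linarith
  qed
  have "cmod ?z \<le> 0"
  proof (rule field_le_epsilon)
    fix e :: real assume "0 < e"
    then show "cmod ?z \<le> 0 + e" using bound[of "e / 2"] by simp
  qed
  then show "x (delta k) h = x delta_e (gadd (gneg k) h) * \<sigma> (gadd (gneg k) h) k"
    by (simp add: d_def)
qed

end

section \<open>Summability of \<open>r\<^bsup>L\<^esup>\<close>\<close>

lemma summable_on_powr_abs_int:
  assumes s: "0 < s" "s < 1"
  shows "(\<lambda>n::int. s powr \<bar>real_of_int n\<bar>) summable_on UNIV"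
proof -
  have geom: "(\<lambda>n::nat. s ^ n) summable_on UNIV"
    using s by (subst summable_on_UNIV_nonneg_real_iff) (auto intro: summable_geometric)
  have "(\<lambda>n::int. s powr \<bar>real_of_int n\<bar>) summable_on range int"
    by (subst summable_on_reindex) (use geom s in \<open>auto simp: o_def powr_realpow\<close>)
  moreover have "(\<lambda>n::int. s powr \<bar>real_of_int n\<bar>) summable_on range (\<lambda>n. - int n)"
    by (subst summable_on_reindex) (use geom s in \<open>auto simp: o_def powr_realpow inj_on_def\<close>)
  moreover have "UNIV = range int \<union> range (\<lambda>n. - int n)"
    by (auto intro: range_eqI[of _ _ "nat _"] simp: image_iff) presburger
  ultimately show ?thesis using summable_on_union by metis
qed

lemma ZN_0: "ZN 0 = {gzero}"
  by (auto simp: ZN_def gzero_def fun_eq_iff)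

lemma ZN_Suc: "ZN (Suc N) = (\<lambda>(g, n). g(N := n)) ` (ZN N \<times> UNIV)"
proof (rule set_eqI, rule iffI)
  fix f assume f: "f \<in> ZN (Suc N)"
  have "f = (f(N := 0))(N := f N)" "f(N := 0) \<in> ZN N" using f by (auto simp: ZN_def)
  then show "f \<in> (\<lambda>(g, n). g(N := n)) ` (ZN N \<times> UNIV)"
    by (auto intro!: image_eqI[where x="(f(N := 0), f N)"])
qed (auto simp: ZN_def)

lemma inj_on_ZN_Suc: "inj_on (\<lambda>(g, n). g(N := n)) (ZN N \<times> UNIV)"
proof (rule inj_onI, clarify)
  fix g n g' n' assume g: "g \<in> ZN N" "g' \<in> ZN N" and eq: "g(N := n) = g'(N := n')"
  have "g i = g' i" for i
    using fun_cong[OF eq, of i] g by (cases "i = N") (auto simp: ZN_def)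
  then show "g = g' \<and> n = n'" using fun_cong[OF eq, of N] by auto
qed

lemma summable_on_powr_L1:
  assumes s: "0 < s" "s < 1"
  shows "(\<lambda>g. s powr L1 N g) summable_on ZN N"
proof (induction N)
  case 0
  then show ?case by (simp add: ZN_0)
next
  case (Suc N)
  let ?S = "infsum (\<lambda>n::int. s powr \<bar>real_of_int n\<bar>) UNIV"
  have fibre: "((\<lambda>n. s powr L1 N g * s powr \<bar>real_of_int n\<bar>) has_sum s powr L1 N g * ?S) UNIV" for g
    by (intro has_sum_cmult_right has_sum_infsum summable_on_powr_abs_int s)
  have "(\<lambda>(g, n). s powr L1 N g * s powr \<bar>real_of_int n\<bar>) summable_on ZN N \<times> UNIV"
    using fibre by (intro summable_on_SigmaI[where g = "\<lambda>g. s powr L1 N g * ?S"])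
      (auto intro: summable_on_cmult_left Suc)
  then have "((\<lambda>g. s powr L1 (Suc N) g) \<circ> (\<lambda>(g, n). g(N := n))) summable_on ZN N \<times> UNIV"
    by (rule summable_on_cong[THEN iffD1, rotated]) (auto simp: L1_def ZN_def powr_add)
  then show ?case
    by (simp only: ZN_Suc summable_on_reindex[OF inj_on_ZN_Suc])
qed

lemma L1_le_L2sq: "L1 N g \<le> L2sq N g"
proof -
  have "\<bar>real_of_int x\<bar> \<le> (real_of_int x)\<^sup>2" for x
  proof (cases "x = 0")
    case False
    then have "\<bar>real_of_int x\<bar> * 1 \<le> \<bar>real_of_int x\<bar> * \<bar>real_of_int x\<bar>"
      by (intro mult_left_mono) auto
    then show ?thesis by (simp add: power2_eq_square abs_mult_self_eq)
  qed simp
  then show ?thesis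
    unfolding L1_def L2sq_def by (intro sum_mono)
qed

lemma L1_le_L2: "L1 N g \<le> real N * L2 N g"
proof -
  have "\<bar>real_of_int (g i)\<bar> \<le> L2 N g" if "i < N" for i
  proof -
    have "(real_of_int (g i))\<^sup>2 \<le> (\<Sum>i<N. (real_of_int (g i))\<^sup>2)"
      using that by (intro member_le_sum) auto
    then show ?thesis unfolding L2_def by (metis real_sqrt_abs real_sqrt_le_mono)
  qed
  then have "L1 N g \<le> (\<Sum>i<N. L2 N g)" unfolding L1_def by (intro sum_mono) auto
  then show ?thesis by simp
qed

text \<open>All three cases reduce to \<open>|\<cdot>|\<^sub>1\<close>, where \<open>r\<^bsup>L\<^sub>1\<^esup>\<close> is a product of two-sided geometric series;
  for \<open>|\<cdot>|\<^sub>2\<close> the base changes to \<open>r\<^bsup>1/N\<^esup>\<close>.\<close>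
lemma summable_on_powr_L:
  assumes L: "L = L1 N \<or> L = L2 N \<or> L = L2sq N" and r: "0 < r" "r < 1"
  shows "(\<lambda>g. r powr L g) summable_on ZN N"
proof -
  consider "L = L1 N" | "L = L2sq N" | "L = L2 N" "N = 0" | "L = L2 N" "N \<noteq> 0" using L by blast
  then show ?thesis
  proof cases
    case 1
    then show ?thesis using summable_on_powr_L1[OF r] by simp
  next
    case 2
    then show ?thesis
      by (auto intro!: summable_on_comparison_test[OF summable_on_powr_L1[OF r]] powr_mono' L1_le_L2sq
          simp: r less_imp_le)
  next
    case 3
    then show ?thesis by (simp add: ZN_0)
  next
    case 4
    define s where "s = r powr (1 / real N)"
    have s: "0 < s" "s < 1"
      using r 4 powr_less_mono2[of "1 / real N" r 1] by (auto simp: s_def)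
    have "r powr L g \<le> s powr L1 N g" for g
    proof -
      have "L1 N g / real N \<le> L2 N g" using L1_le_L2[of N g] 4 by (simp add: field_simps)
      then have "r powr L2 N g \<le> r powr (L1 N g / real N)" using r by (intro powr_mono') auto
      then show ?thesis by (simp add: s_def powr_powr 4)
    qed
    then show ?thesis
      by (intro summable_on_comparison_test[OF summable_on_powr_L1[OF s]]) auto
  qed
qed

section \<open>Fourier multipliers with Schur multiplier symbols\<close>

abbreviation multiplier_series :: "nat \<Rightarrow> (grp \<Rightarrow> grp \<Rightarrow> complex) \<Rightarrow> (grp \<Rightarrow> real) \<Rightarrow> op \<Rightarrow> op" where
  "multiplier_series N \<sigma> \<phi> T \<equiv> Lam_series N \<sigma> (\<lambda>g. of_real (\<phi> g) * xhat T g)"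

lemma norm_xhat_le:
  assumes T: "bounded_op N T"
  shows "cmod (xhat T g) \<le> opnorm N T"
proof -
  have e: "delta_e \<in> l2 N" "l2norm N delta_e \<le> 1"
    using delta_l2[OF gzero_ZN, of N] by (auto simp: delta_e_eq)
  have "cmod (xhat T g) \<le> l2norm N (T delta_e)"
    unfolding xhat_def by (rule l2_norm_apply_le[OF bounded_op_l2[OF T e(1)]])
  also have "\<dots> \<le> opnorm N T * l2norm N delta_e"
    by (rule opnorm_bound[OF T e(1)])
  also have "\<dots> \<le> opnorm N T"
    using e(2) opnorm_nonneg[OF T] by (simp add: mult_left_le)
  finally show ?thesis .
qed

lemma multiplier_coeffs_summable:
  assumes "(\<lambda>g. \<bar>\<phi> g\<bar>) summable_on ZN N" "bounded_op N T"
  shows "(\<lambda>g. cmod (of_real (\<phi> g) * xhat T g)) summable_on ZN N"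
proof (rule summable_on_comparison_test)
  show "(\<lambda>g. \<bar>\<phi> g\<bar> * opnorm N T) summable_on ZN N"
    using assms(1) by (rule summable_on_cmult_left)
  show "cmod (of_real (\<phi> g) * xhat T g) \<le> \<bar>\<phi> g\<bar> * opnorm N T" for g
    using norm_xhat_le[OF assms(2), of g] by (simp add: norm_mult mult_left_mono)
qed simp

lemma abs_sums_le_multiplier_coeffs:
  assumes "(\<lambda>g. \<bar>\<phi> g\<bar>) summable_on ZN N" "bounded_op N T"
  obtains B where "abs_sums_le N (\<lambda>g. of_real (\<phi> g) * xhat T g) B"
  using abs_sums_le_infsum[OF multiplier_coeffs_summable[OF assms]] by blast

lemma multiplier_series_trunc:
  assumes T: "twisted_toeplitz N \<sigma> T" and K: "finite K" "K \<subseteq> ZN N" and h: "h \<in> ZN N"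
  shows "multiplier_series N \<sigma> \<phi> T (trunc K \<xi>) h
       = (\<Sum>k\<in>K. of_real (\<phi> (gadd (gneg k) h)) * T (delta k) h * \<xi> k)"
proof -
  let ?f = "\<lambda>g. of_real (\<phi> g) * xhat T g * Lam N \<sigma> g (trunc K \<xi>) h"
  let ?S = "(\<lambda>k. gadd (gneg k) h) ` K"
  have inj: "inj_on (\<lambda>k. gadd (gneg k) h) K"
    by (rule inj_onI) (metis gdiff_gdiff)
  have "multiplier_series N \<sigma> \<phi> T (trunc K \<xi>) h = infsum ?f ?S"
    unfolding Lam_series_def
  proof (rule infsum_cong_neutral)
    fix g assume "g \<in> ZN N - ?S"
    then have "gadd (gneg g) h \<notin> K" by (metis DiffD2 gdiff_gdiff image_eqI)
    then show "?f g = 0" by (simp add: Lam_def trunc_def)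
  qed (use K h in auto)
  also have "\<dots> = (\<Sum>k\<in>K. ?f (gadd (gneg k) h))"
    using K(1) by (simp add: sum.reindex[OF inj])
  also have "\<dots> = (\<Sum>k\<in>K. of_real (\<phi> (gadd (gneg k) h)) * T (delta k) h * \<xi> k)"
  proof (rule sum.cong[OF refl])
    fix k assume k: "k \<in> K"
    then have "T (delta k) h = T delta_e (gadd (gneg k) h) * \<sigma> (gadd (gneg k) h) k"
      using T h K by (auto simp: twisted_toeplitz_def)
    then show "?f (gadd (gneg k) h) = of_real (\<phi> (gadd (gneg k) h)) * T (delta k) h * \<xi> k"
      using h k by (simp add: Lam_def trunc_def gdiff_gdiff xhat_def mult_ac)
  qed
  finally show ?thesis .
qed

context
  fixes N :: nat and \<sigma> :: "grp \<Rightarrow> grp \<Rightarrow> complex"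
  assumes cocycle: "normalized_cocycle N \<sigma>"
begin

text \<open>Testing the Schur product against the output vector \<open>v\<close> itself turns the matrix form into
  \<open>\<parallel>v\<parallel>\<^sup>2\<close> on finite sets, which the Schur bound controls by \<open>\<parallel>T\<parallel> \<parallel>\<xi>\<parallel> \<parallel>v\<parallel>\<close>.\<close>
lemma opnorm_multiplier_series_le:
  assumes T: "bounded_op N T" "twisted_toeplitz N \<sigma> T"
    and \<phi>: "(\<lambda>g. \<bar>\<phi> g\<bar>) summable_on ZN N"
    and schur: "schur_multiplier N (\<lambda>h k. \<phi> (gadd (gneg k) h)) 1"
  shows "opnorm N (multiplier_series N \<sigma> \<phi> T) \<le> opnorm N T"
proof -
  obtain B where c: "abs_sums_le N (\<lambda>g. of_real (\<phi> g) * xhat T g) B"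
    using abs_sums_le_multiplier_coeffs[OF \<phi> T(1)] .
  let ?X = "\<lambda>h k. T (delta k) h" and ?\<kappa> = "\<lambda>h k. \<phi> (gadd (gneg k) h)"
  have schur_T: "matrix_bounded N (schur_prod ?\<kappa> ?X) (1 * opnorm N T)"
    by (rule schur_multiplierD[OF schur opnorm_nonneg[OF T(1)] matrix_bounded_opnorm[OF T(1)]])
  show ?thesis
  proof (rule opnorm_le_trunc[OF bounded_op_Lam_series[OF cocycle c] opnorm_nonneg[OF T(1)]])
    fix K \<xi> assume K: "finite K" "K \<subseteq> ZN N"
    let ?v = "multiplier_series N \<sigma> \<phi> T (trunc K \<xi>)"
    show "l2norm N ?v \<le> opnorm N T * l2norm_on K \<xi>"
    proof (rule conjunct2[OF l2I])
      show "g \<notin> ZN N \<Longrightarrow> ?v g = 0" for g by (simp add: Lam_series_def Lam_outside)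
      fix H assume H: "finite H" "H \<subseteq> ZN N"
      have "matrix_form (schur_prod ?\<kappa> ?X) H K \<xi> ?v = (\<Sum>h\<in>H. ?v h * cnj (?v h))"
        unfolding matrix_form_def using H
        by (intro sum.cong refl) (auto simp: multiplier_series_trunc[OF T(2) K] sum_distrib_right)
      also have "\<dots> = of_real ((l2norm_on H ?v)\<^sup>2)"
        unfolding L2_set_def using H by (simp add: complex_mult_cnj cmod_power2 sum_nonneg)
      finally have "(l2norm_on H ?v)\<^sup>2 = cmod (matrix_form (schur_prod ?\<kappa> ?X) H K \<xi> ?v)"
        by (simp add: norm_power)
      also have "\<dots> \<le> opnorm N T * l2norm_on K \<xi> * l2norm_on H ?v"
        using matrix_boundedD[OF schur_T H(1) K(1) H(2) K(2)] by simp
      finally show "l2norm_on H ?v \<le> opnorm N T * l2norm_on K \<xi>"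
        using L2_set_nonneg[of "\<lambda>g. cmod (?v g)" H] opnorm_nonneg[OF T(1)]
        by (cases "l2norm_on H ?v = 0") (auto simp: power2_eq_square mult_le_cancel_right)
    qed
  qed
qed

end

section \<open>Fourier summing nets\<close>

lemma fourier_lim_Mphi:
  assumes "fourier_lim N \<sigma> \<phi> x y"
  shows "fourier_lim N \<sigma> \<phi> x (Mphi N \<sigma> \<phi> x)"
  unfolding Mphi_def by (rule someI[where P = "fourier_lim N \<sigma> \<phi> x", OF assms])

context
  fixes N :: nat and \<sigma> :: "grp \<Rightarrow> grp \<Rightarrow> complex"
  assumes cocycle: "normalized_cocycle N \<sigma>"
begin

lemma xhat_lincomb:
  assumes F: "finite F" "F \<subseteq> ZN N" and g: "g \<in> ZN N"
  shows "xhat (lincomb N \<sigma> c F) g = (if g \<in> F then c g else 0)"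
proof -
  have "xhat (lincomb N \<sigma> c F) g = (\<Sum>g'\<in>F. if g' = g then c g' else 0)"
    unfolding xhat_def lincomb_def
  proof (rule sum.cong[OF refl])
    fix g' assume "g' \<in> F"
    then have g': "g' \<in> ZN N" using F by auto
    show "c g' * Lam N \<sigma> g' delta_e g = (if g' = g then c g' else 0)"
      using g g' normalized_cocycle_gzero[OF cocycle g']
      by (auto simp: Lam_def delta_e_def gdiff_eq_iff)
  qed
  also have "\<dots> = (if g \<in> F then c g else 0)"
    using F by (simp add: sum.delta')
  finally show ?thesis .
qed

lemma multiplier_series_lincomb:
  assumes F: "finite F" "F \<subseteq> ZN N"
  shows "multiplier_series N \<sigma> \<phi> (lincomb N \<sigma> c F) \<xi> = lincomb N \<sigma> (\<lambda>g. of_real (\<phi> g) * c g) F \<xi>"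
proof -
  have "multiplier_series N \<sigma> \<phi> (lincomb N \<sigma> c F)
      = Lam_series N \<sigma> (\<lambda>g. if g \<in> F then of_real (\<phi> g) * c g else 0)"
    by (rule Lam_series_cong) (simp add: xhat_lincomb[OF F])
  then show ?thesis by (simp add: lincomb_eq_Lam_series[OF F])
qed

lemma Mphi_eq_multiplier_series:
  assumes "(\<lambda>g. \<bar>\<phi> g\<bar>) summable_on ZN N" "bounded_op N x" "\<xi> \<in> l2 N"
  shows "Mphi N \<sigma> (\<lambda>g. of_real (\<phi> g)) x \<xi> = multiplier_series N \<sigma> \<phi> x \<xi>"
proof -
  have "fourier_lim N \<sigma> (\<lambda>g. of_real (\<phi> g)) x (multiplier_series N \<sigma> \<phi> x)"
    by (rule fourier_lim_Lam_series[OF cocycle multiplier_coeffs_summable[OF assms(1,2)]])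
  from fourier_lim_unique[OF cocycle fourier_lim_Mphi[OF this] this assms(3)] show ?thesis .
qed

lemma multiplier_series_opdiff:
  assumes \<phi>: "(\<lambda>g. \<bar>\<phi> g\<bar>) summable_on ZN N" and S: "bounded_op N S" and T: "bounded_op N T"
    and \<xi>: "\<xi> \<in> l2 N"
  shows "opdiff (multiplier_series N \<sigma> \<phi> S) (multiplier_series N \<sigma> \<phi> T) \<xi>
    = multiplier_series N \<sigma> \<phi> (opdiff S T) \<xi>"
proof -
  obtain B B' where "abs_sums_le N (\<lambda>g. of_real (\<phi> g) * xhat S g) B"
    "abs_sums_le N (\<lambda>g. of_real (\<phi> g) * xhat T g) B'"
    using abs_sums_le_multiplier_coeffs[OF \<phi> S] abs_sums_le_multiplier_coeffs[OF \<phi> T] by metis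
  from Lam_series_diff[OF cocycle this \<xi>] show ?thesis
    by (simp add: xhat_def opdiff_apply algebra_simps)
qed

lemma bounded_op_multiplier_series:
  assumes "(\<lambda>g. \<bar>\<phi> g\<bar>) summable_on ZN N" "bounded_op N T"
  shows "bounded_op N (multiplier_series N \<sigma> \<phi> T)"
  using abs_sums_le_multiplier_coeffs[OF assms] bounded_op_Lam_series[OF cocycle] by metis

lemma opnorm_multiplier_series_lincomb_le:
  assumes F: "finite F" "F \<subseteq> ZN N"
  shows "opnorm N (opdiff (multiplier_series N \<sigma> \<phi> (lincomb N \<sigma> c F)) (lincomb N \<sigma> c F))
    \<le> (\<Sum>g\<in>F. \<bar>\<phi> g - 1\<bar> * cmod (c g))"
proof -
  have "opdiff (multiplier_series N \<sigma> \<phi> (lincomb N \<sigma> c F)) (lincomb N \<sigma> c F) \<xi>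
      = lincomb N \<sigma> (\<lambda>g. of_real (\<phi> g - 1) * c g) F \<xi>" for \<xi>
    unfolding opdiff_apply multiplier_series_lincomb[OF F]
    by (simp add: lincomb_def fun_eq_iff sum_subtractf[symmetric] algebra_simps)
  then have "opnorm N (opdiff (multiplier_series N \<sigma> \<phi> (lincomb N \<sigma> c F)) (lincomb N \<sigma> c F))
      = opnorm N (lincomb N \<sigma> (\<lambda>g. of_real (\<phi> g - 1) * c g) F)"
    by (intro opnorm_cong)
  also have "\<dots> \<le> (\<Sum>g\<in>F. \<bar>\<phi> g - 1\<bar> * cmod (c g))"
  proof -
    have "cmod (of_real (\<phi> g) - 1) = \<bar>\<phi> g - 1\<bar>" for g
      by (metis norm_of_real of_real_1 of_real_diff)
    then show ?thesis
      using opnorm_lincomb_le[OF cocycle F, of "\<lambda>g. of_real (\<phi> g - 1) * c g"] by (simp add: norm_mult)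
  qed
  finally show ?thesis .
qed

text \<open>An \<open>\<epsilon>/3\<close> argument: approximate \<open>x\<close> by a finite linear combination \<open>a\<close> of the \<open>\<Lambda>\<^sub>\<sigma>(g)\<close>; the
  multipliers are contractive on \<open>x - a\<close> and converge to the identity on \<open>a\<close>.\<close>
lemma multiplier_series_tendsto:
  assumes x: "x \<in> Cstar_r N \<sigma>"
    and symbols: "eventually (\<lambda>i. (\<lambda>g. \<bar>\<phi> i g\<bar>) summable_on ZN N \<and>
      schur_multiplier N (\<lambda>h k. \<phi> i (gadd (gneg k) h)) 1) F"
    and pointwise: "\<And>g. g \<in> ZN N \<Longrightarrow> ((\<lambda>i. \<phi> i g) \<longlongrightarrow> 1) F"
  shows "((\<lambda>i. opnorm N (opdiff (multiplier_series N \<sigma> (\<phi> i) x) x)) \<longlongrightarrow> 0) F"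
proof (rule tendstoI)
  fix e :: real assume e: "0 < e"
  have bx: "bounded_op N x" by (rule Cstar_rD(1)[OF x])
  have tx: "twisted_toeplitz N \<sigma> x" by (rule twisted_toeplitz_Cstar_r[OF cocycle x])
  have "e / 3 > 0" using e by simp
  from Cstar_rD(2)[OF x this] obtain A c where A: "finite A" "A \<subseteq> ZN N"
    and close: "opnorm N (opdiff x (lincomb N \<sigma> c A)) < e / 3" by blast
  define a where "a = lincomb N \<sigma> c A"
  have ba: "bounded_op N a" unfolding a_def by (rule bounded_op_lincomb_Lam[OF cocycle A])
  have ta: "twisted_toeplitz N \<sigma> a" unfolding a_def by (rule twisted_toeplitz_lincomb[OF cocycle A])
  have "((\<lambda>i. \<Sum>g\<in>A. \<bar>\<phi> i g - 1\<bar> * cmod (c g)) \<longlongrightarrow> (\<Sum>g\<in>A. \<bar>1 - 1\<bar> * cmod (c g))) F"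
    using A by (intro tendsto_sum tendsto_mult tendsto_rabs tendsto_diff tendsto_const pointwise) auto
  then have "eventually (\<lambda>i. (\<Sum>g\<in>A. \<bar>\<phi> i g - 1\<bar> * cmod (c g)) < e / 3) F"
    using e by (intro order_tendstoD) auto
  with symbols show "eventually (\<lambda>i. dist (opnorm N (opdiff (multiplier_series N \<sigma> (\<phi> i) x) x)) 0 < e) F"
  proof eventually_elim
    case (elim i)
    then have \<phi>: "(\<lambda>g. \<bar>\<phi> i g\<bar>) summable_on ZN N"
      and schur: "schur_multiplier N (\<lambda>h k. \<phi> i (gadd (gneg k) h)) 1" by auto
    let ?M = "multiplier_series N \<sigma> (\<phi> i)"
    note bM = bounded_op_multiplier_series[OF \<phi>]
    have "opnorm N (opdiff (?M x) x) \<le> opnorm N (opdiff (?M x) (?M a)) + opnorm N (opdiff (?M a) x)"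
      by (rule opnorm_opdiff_triangle[OF bM[OF bx] bM[OF ba] bx])
    also have "opnorm N (opdiff (?M a) x) \<le> opnorm N (opdiff (?M a) a) + opnorm N (opdiff a x)"
      by (rule opnorm_opdiff_triangle[OF bM[OF ba] ba bx])
    also have "opnorm N (opdiff (?M x) (?M a)) = opnorm N (?M (opdiff x a))"
      by (intro opnorm_cong multiplier_series_opdiff \<phi> bx ba)
    also have "\<dots> \<le> opnorm N (opdiff x a)"
      by (intro opnorm_multiplier_series_le[OF cocycle] bounded_op_opdiff twisted_toeplitz_opdiff
          bx ba tx ta \<phi> schur)
    also have "opnorm N (opdiff (?M a) a) \<le> (\<Sum>g\<in>A. \<bar>\<phi> i g - 1\<bar> * cmod (c g))"
      unfolding a_def by (rule opnorm_multiplier_series_lincomb_le[OF A])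
    also have "opnorm N (opdiff a x) = opnorm N (opdiff x a)"
      by (rule opnorm_opdiff_commute)
    finally have "opnorm N (opdiff (?M x) x) < e"
      using close elim unfolding a_def by linarith
    then show ?case
      using opnorm_nonneg[OF bounded_op_opdiff[OF bM[OF bx] bx]] by simp
  qed
qed

lemma bounded_fourier_summing_netI:
  assumes summable: "\<And>i. i \<in> I \<Longrightarrow> (\<lambda>g. \<bar>\<phi> i g\<bar>) summable_on ZN N"
    and schur: "\<And>i. i \<in> I \<Longrightarrow> schur_multiplier N (\<lambda>h k. \<phi> i (gadd (gneg k) h)) 1"
    and pointwise: "\<And>g. g \<in> ZN N \<Longrightarrow> ((\<lambda>i. \<phi> i g) \<longlongrightarrow> 1) F"
    and eventually_I: "eventually (\<lambda>i. i \<in> I) F"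
  shows "bounded_fourier_summing_net N \<sigma> (\<lambda>i g. of_real (\<phi> i g)) I F"
proof -
  have Mphi: "opnorm N (opdiff (Mphi N \<sigma> (\<lambda>g. of_real (\<phi> i g)) x) T)
      = opnorm N (opdiff (multiplier_series N \<sigma> (\<phi> i) x) T)"
    "opnorm N (Mphi N \<sigma> (\<lambda>g. of_real (\<phi> i g)) x) = opnorm N (multiplier_series N \<sigma> (\<phi> i) x)"
    if "i \<in> I" "x \<in> Cstar_r N \<sigma>" for i x T
    using Mphi_eq_multiplier_series[OF summable[OF that(1)]] that(2)
    by (auto intro!: opnorm_cong simp: opdiff_apply Cstar_rD(1))
  show ?thesis
    unfolding bounded_fourier_summing_net_def
  proof (intro conjI ballI exI[of _ 1])
    fix i assume "i \<in> I"
    then show "(\<lambda>g. of_real (\<phi> i g)) \<in> MCF N \<sigma>"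
      unfolding MCF_def
      by (blast intro: fourier_lim_Lam_series[OF cocycle multiplier_coeffs_summable] summable Cstar_rD(1))
  next
    fix x assume x: "x \<in> Cstar_r N \<sigma>"
    have "eventually (\<lambda>i. (\<lambda>g. \<bar>\<phi> i g\<bar>) summable_on ZN N \<and>
        schur_multiplier N (\<lambda>h k. \<phi> i (gadd (gneg k) h)) 1) F"
      using eventually_I summable schur by (auto elim: eventually_mono)
    note tendsto = multiplier_series_tendsto[OF x this pointwise]
    have "eventually (\<lambda>i. opnorm N (opdiff (multiplier_series N \<sigma> (\<phi> i) x) x)
        = opnorm N (opdiff (Mphi N \<sigma> (\<lambda>g. of_real (\<phi> i g)) x) x)) F"
      using eventually_I by (auto elim: eventually_mono simp: Mphi(1)[OF _ x])
    from Lim_transform_eventually[OF tendsto this]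
    show "((\<lambda>i. opnorm N (opdiff (Mphi N \<sigma> (\<lambda>g. of_real (\<phi> i g)) x) x)) \<longlongrightarrow> 0) F" .
  next
    fix i x assume i: "i \<in> I" and x: "x \<in> Cstar_r N \<sigma>"
    have "opnorm N (multiplier_series N \<sigma> (\<phi> i) x) \<le> opnorm N x"
      using x by (intro opnorm_multiplier_series_le[OF cocycle] twisted_toeplitz_Cstar_r[OF cocycle]
          summable schur i Cstar_rD(1))
    then show "opnorm N (Mphi N \<sigma> (\<lambda>g. of_real (\<phi> i g)) x) \<le> 1 * opnorm N x"
      by (simp add: Mphi(2)[OF i x])
  qed
qed

end

theorem theorem5p7:
  fixes N :: nat and L :: "grp \<Rightarrow> real" and \<sigma> :: "grp \<Rightarrow> grp \<Rightarrow> complex"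
  assumes "L = L1 N \<or> L = L2 N \<or> L = L2sq N"
    and "normalized_cocycle N \<sigma>"
  shows "bounded_fourier_summing_net N \<sigma> (\<lambda>r g. complex_of_real (r powr L g)) {0<..<1} (at_left 1)
       \<and> (\<forall>x\<in>Cstar_r N \<sigma>. \<forall>r\<in>{0<..<1::real}.
            fourier_lim N \<sigma> (\<lambda>g. complex_of_real (r powr L g)) x (Mphi N \<sigma> (\<lambda>g. complex_of_real (r powr L g)) x))
       \<and> (\<forall>x\<in>Cstar_r N \<sigma>.
            ((\<lambda>r. opnorm N (opdiff (Mphi N \<sigma> (\<lambda>g. complex_of_real (r powr L g)) x) x)) \<longlongrightarrow> 0) (at_left 1))"
proof -
  have net: "bounded_fourier_summing_net N \<sigma> (\<lambda>r g. complex_of_real (r powr L g)) {0<..<1} (at_left 1)"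
  proof (rule bounded_fourier_summing_netI[OF assms(2)])
    fix r :: real assume "r \<in> {0<..<1}"
    then show "(\<lambda>g. \<bar>r powr L g\<bar>) summable_on ZN N"
      and "schur_multiplier N (\<lambda>h k. r powr L (gadd (gneg k) h)) 1"
      using summable_on_powr_L[OF assms(1)] schur_multiplier_powr_L[OF assms(1)] by auto
  next
    have "((\<lambda>r. r powr L g) \<longlongrightarrow> 1 powr L g) (at_left 1)" for g
      by (intro tendsto_powr tendsto_ident_at tendsto_const) simp
    then show "((\<lambda>r. r powr L g) \<longlongrightarrow> 1) (at_left 1)" for g
      by simp
    show "eventually (\<lambda>r. r \<in> {0<..<1}) (at_left (1::real))"
      by (rule eventually_at_left_real) simp
  qed
  then show ?thesis
    using fourier_lim_Mphi unfolding bounded_fourier_summing_net_def MCF_def by blast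
qed

end
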